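(* Let $n\ge 3$, let $K_n$ be the complete graph on $n$ vertices, and let $J(m,r)$ be the Johnson graph with $r\ge 1$, $m\ge 2r$ and $m\ge 3$. Let the distinct adjacency eigenvalues of $J(m,r)$ be $\lambda_i=(r-i)(m-r-i)-i$ for $i=0,1,\ldots,r$, and its distinct distance eigenvalues be $\mu_0=s$, $\mu_1=-\frac{s}{m-1}$, $\mu_2=0$, where $s=\sum_{j=0}^{r} j k_j$ and $k_j=\binom{r}{j}\binom{m-r}{j}$ for $j=0,1,\ldots,r$. Then the distance eigenvalues of $K_n\otimes J(m,r)$ are $2n-2+ns+\lambda_0$, $2n-2-\frac{ns}{m-1}+\lambda_1$, $2n-2+\lambda_i$ for $i=2,3,\ldots,r$, and $\lambda_i-2$ for $i=0,1,\ldots,r$.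
   Context: The Johnson graph $J(m,r)$ has as vertices all $r$-element subsets of an $m$-element set, two vertices being adjacent if and only if they intersect in exactly $r-1$ elements. The Kronecker product $G\otimes H$ of simple graphs $G,H$ has vertex set $V(G)\times V(H)$, with $(x,y)$ adjacent to $(u,v)$ if and only if $xu\in E(G)$ and $yv\in E(H)$. Distance eigenvalues are the eigenvalues of the distance matrix, whose $(u,v)$ entry is the length of a shortest $u$–$v$ path. *)

theory Defs
  imports Complex_Main
begin

text \<open>A simple graph is given by a finite vertex set V and a symmetric, irreflexive
adjacency relation E (only its restriction to V matters).\<close>

definition walk_of_length :: "'a set \<Rightarrow> ('a \<Rightarrow> 'a \<Rightarrow> bool) \<Rightarrow> 'a \<Rightarrow> 'a \<Rightarrow> nat \<Rightarrow> bool" where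
  "walk_of_length V E x y k \<longleftrightarrow>
     (\<exists>p :: nat \<Rightarrow> 'a. p 0 = x \<and> p k = y \<and> (\<forall>i\<le>k. p i \<in> V) \<and>
        (\<forall>i<k. E (p i) (p (Suc i))))"

text \<open>Length of a shortest x--y path (graphs considered here are connected).\<close>
definition graph_dist :: "'a set \<Rightarrow> ('a \<Rightarrow> 'a \<Rightarrow> bool) \<Rightarrow> 'a \<Rightarrow> 'a \<Rightarrow> nat" where
  "graph_dist V E x y = (LEAST k. walk_of_length V E x y k)"

definition matrix_eigenvalues :: "'a set \<Rightarrow> ('a \<Rightarrow> 'a \<Rightarrow> real) \<Rightarrow> real set" where
  "matrix_eigenvalues V M =
     {\<mu>. \<exists>v :: 'a \<Rightarrow> real. (\<forall>x. x \<notin> V \<longrightarrow> v x = 0) \<and> (\<exists>x\<in>V. v x \<noteq> 0) \<and>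
          (\<forall>x\<in>V. (\<Sum>y\<in>V. M x y * v y) = \<mu> * v x)}"

definition distance_matrix :: "'a set \<Rightarrow> ('a \<Rightarrow> 'a \<Rightarrow> bool) \<Rightarrow> 'a \<Rightarrow> 'a \<Rightarrow> real" where
  "distance_matrix V E x y = real (graph_dist V E x y)"

definition distance_eigenvalues :: "'a set \<Rightarrow> ('a \<Rightarrow> 'a \<Rightarrow> bool) \<Rightarrow> real set" where
  "distance_eigenvalues V E = matrix_eigenvalues V (distance_matrix V E)"

definition complete_verts :: "nat \<Rightarrow> nat set" where
  "complete_verts n = {0..<n}"
definition complete_adj :: "nat \<Rightarrow> nat \<Rightarrow> bool" where
  "complete_adj i j \<longleftrightarrow> i \<noteq> j"

definition johnson_verts :: "nat \<Rightarrow> nat \<Rightarrow> nat set set" where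
  "johnson_verts m r = {A. A \<subseteq> {0..<m} \<and> card A = r}"
definition johnson_adj :: "nat \<Rightarrow> nat set \<Rightarrow> nat set \<Rightarrow> bool" where
  "johnson_adj r A B \<longleftrightarrow> card (A \<inter> B) = r - 1"

definition kron_verts :: "'a set \<Rightarrow> 'b set \<Rightarrow> ('a \<times> 'b) set" where
  "kron_verts V1 V2 = V1 \<times> V2"
definition kron_adj :: "('a \<Rightarrow> 'a \<Rightarrow> bool) \<Rightarrow> ('b \<Rightarrow> 'b \<Rightarrow> bool) \<Rightarrow> 'a \<times> 'b \<Rightarrow> 'a \<times> 'b \<Rightarrow> bool" where
  "kron_adj E1 E2 p q \<longleftrightarrow> E1 (fst p) (fst q) \<and> E2 (snd p) (snd q)"

definition johnson_lambda :: "nat \<Rightarrow> nat \<Rightarrow> nat \<Rightarrow> real" where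
  "johnson_lambda m r i = (real r - real i) * (real m - real r - real i) - real i"
definition johnson_k :: "nat \<Rightarrow> nat \<Rightarrow> nat \<Rightarrow> nat" where
  "johnson_k m r j = (r choose j) * ((m - r) choose j)"
definition johnson_s :: "nat \<Rightarrow> nat \<Rightarrow> real" where
  "johnson_s m r = (\<Sum>j=0..r. real j * real (johnson_k m r j))"

end

(*
  Let Adj and Dist be the adjacency and distance matrices of J(m,r); r-sets A, B are at distance
  r - card (A Int B). A shortest walk in K_n x J(m,r) follows a geodesic of J(m,r); only at Johnson
  distance 0 or 1 does the K_n-coordinate force a detour of length 2. Hence the distance matrix is
  J_n (x) (Dist + 2I) + I_n (x) (Adj - 2I), with (x) the Kronecker product of matrices, and a block
  matrix J_n (x) X + I_n (x) Y has as spectrum the union of the spectra of Y and of nX + Y. It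
  remains to find the spectra of Adj and of n Dist + Adj.

  On r-sets, Adj is the shadow sum of the shade sum minus r. Shade and shadow sums commute up to
  the scalar m - 2k on k-sets, so shadow sums lift eigenfunctions from level k to level k + 1 with
  a shifted eigenvalue. Starting from the product of the [2j in S] - [2j+1 in S], j < i, on i-sets,
  this produces the eigenvalues (r-i)(m-r-i+1) - r = lambda_i; conversely, an eigenfunction whose
  sums over the supersets of all small sets vanish has a large index i.

  Since r - card (A Int B) = r - sum_x [x in A][x in B], an eigenvector of n Dist + Adj has nonzero
  total sum (eigenvalue ns + lambda_0), or vanishing total but a nonzero sum over the sets through
  some point x, and pairing with the indicator of x gives lambda_1 - ns/(m-1), or all these sums
  vanish and it is an eigenvector of Adj of index at least 2.
*)
theory Submission
  imports Defs
begin

section \<open>Eigenvalues of matrices indexed by finite sets\<close>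

lemma matrix_eigenvaluesI:
  assumes "\<And>x. x \<notin> V \<Longrightarrow> v x = 0" "a \<in> V" "v a \<noteq> 0"
    and "\<And>x. x \<in> V \<Longrightarrow> (\<Sum>y\<in>V. M x y * v y) = \<mu> * v x"
  shows "\<mu> \<in> matrix_eigenvalues V M"
  unfolding matrix_eigenvalues_def using assms by blast

lemma matrix_eigenvaluesE:
  assumes "\<mu> \<in> matrix_eigenvalues V M"
  obtains v a where "\<And>x. x \<notin> V \<Longrightarrow> v x = 0" "a \<in> V" "v a \<noteq> 0"
    "\<And>x. x \<in> V \<Longrightarrow> (\<Sum>y\<in>V. M x y * v y) = \<mu> * v x"
  using assms unfolding matrix_eigenvalues_def by blast

lemma matrix_eigenvalues_cong:
  assumes "\<And>x y. x \<in> V \<Longrightarrow> y \<in> V \<Longrightarrow> M x y = M' x y"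
  shows "matrix_eigenvalues V M = matrix_eigenvalues V M'"
proof -
  have "(\<Sum>y\<in>V. M x y * v y) = (\<Sum>y\<in>V. M' x y * v y)" if "x \<in> V" for x v
    using assms that by (intro sum.cong) auto
  then show ?thesis unfolding matrix_eigenvalues_def by simp
qed

lemma matrix_eigenvalues_add_diagonal:
  assumes "finite V"
  shows "matrix_eigenvalues V (\<lambda>x y. M x y + (if x = y then c else 0)) = (\<lambda>t. t + c) ` matrix_eigenvalues V M"
proof -
  have row: "(\<Sum>y\<in>V. (M x y + (if x = y then c else 0)) * v y) = (\<Sum>y\<in>V. M x y * v y) + c * v x"
    if "x \<in> V" for x v
  proof -
    have "(\<Sum>y\<in>V. (M x y + (if x = y then c else 0)) * v y) =
          (\<Sum>y\<in>V. M x y * v y + (if x = y then c * v y else 0))"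
      by (intro sum.cong) (auto simp: distrib_right)
    then show ?thesis using assms that by (simp add: sum.distrib sum.delta)
  qed
  have "(\<Sum>y\<in>V. (M x y + (if x = y then c else 0)) * v y) = \<mu> * v x \<longleftrightarrow>
        (\<Sum>y\<in>V. M x y * v y) = (\<mu> - c) * v x" if "x \<in> V" for x v \<mu>
    using row[OF that, of v] by (auto simp: algebra_simps)
  then have "\<mu> \<in> matrix_eigenvalues V (\<lambda>x y. M x y + (if x = y then c else 0)) \<longleftrightarrow>
        \<mu> - c \<in> matrix_eigenvalues V M" for \<mu>
    unfolding matrix_eigenvalues_def by simp
  moreover have "\<mu> \<in> (\<lambda>t. t + c) ` matrix_eigenvalues V M \<longleftrightarrow> \<mu> - c \<in> matrix_eigenvalues V M" for \<mu>
  proof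
    show "\<mu> - c \<in> matrix_eigenvalues V M" if "\<mu> \<in> (\<lambda>t. t + c) ` matrix_eigenvalues V M"
      using that by auto
    show "\<mu> \<in> (\<lambda>t. t + c) ` matrix_eigenvalues V M" if "\<mu> - c \<in> matrix_eigenvalues V M"
      using image_eqI[OF _ that, of \<mu> "\<lambda>t. t + c"] by simp
  qed
  ultimately show ?thesis by (intro set_eqI) simp
qed

lemma eigenvalue_eq_by_pairing:
  fixes M :: "'a \<Rightarrow> 'a \<Rightarrow> real"
  assumes sym: "\<And>x y. x \<in> V \<Longrightarrow> y \<in> V \<Longrightarrow> M x y = M y x"
    and v: "\<And>x. x \<in> V \<Longrightarrow> (\<Sum>y\<in>V. M x y * v y) = \<mu> * v x"
    and w: "\<And>x. x \<in> V \<Longrightarrow> (\<Sum>y\<in>V. M x y * w y) = \<beta> * w x + \<gamma>"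
    and "\<gamma> * (\<Sum>x\<in>V. v x) = 0" and "(\<Sum>x\<in>V. w x * v x) \<noteq> 0"
  shows "\<mu> = \<beta>"
proof -
  have "\<mu> * (\<Sum>x\<in>V. w x * v x) = (\<Sum>x\<in>V. w x * (\<mu> * v x))"
    unfolding sum_distrib_left by (simp add: ac_simps)
  also have "\<dots> = (\<Sum>x\<in>V. w x * (\<Sum>y\<in>V. M x y * v y))"
    using v by simp
  also have "\<dots> = (\<Sum>x\<in>V. \<Sum>y\<in>V. w x * M x y * v y)"
    by (simp add: sum_distrib_left mult.assoc)
  also have "\<dots> = (\<Sum>y\<in>V. v y * (\<Sum>x\<in>V. M y x * w x))"
    using sym by (subst sum.swap) (simp add: sum_distrib_left mult_ac)
  also have "\<dots> = \<beta> * (\<Sum>x\<in>V. w x * v x) + \<gamma> * (\<Sum>x\<in>V. v x)"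
    using w by (simp add: algebra_simps sum.distrib sum_distrib_left)
  finally show ?thesis using assms(4,5) by simp
qed

text \<open>The block matrix \<open>J\<^sub>n \<otimes> X + I\<^sub>n \<otimes> Y\<close> on \<open>{0..<n} \<times> P\<close>: diagonal blocks \<open>X + Y\<close>,
  off-diagonal blocks \<open>X\<close>.\<close>
definition uniform_block_matrix ::
    "('a \<Rightarrow> 'a \<Rightarrow> real) \<Rightarrow> ('a \<Rightarrow> 'a \<Rightarrow> real) \<Rightarrow> nat \<times> 'a \<Rightarrow> nat \<times> 'a \<Rightarrow> real" where
  "uniform_block_matrix X Y p q = X (snd p) (snd q) + (if fst p = fst q then Y (snd p) (snd q) else 0)"

lemma uniform_block_matrix_row_sum:
  assumes "finite P" and "i < n"
  shows "(\<Sum>q\<in>{0..<n} \<times> P. uniform_block_matrix X Y (i, A) q * v q) =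
    (\<Sum>B\<in>P. X A B * (\<Sum>j<n. v (j, B))) + (\<Sum>B\<in>P. Y A B * v (i, B))"
proof -
  have "(\<Sum>q\<in>{0..<n} \<times> P. uniform_block_matrix X Y (i, A) q * v q) =
      (\<Sum>j\<in>{0..<n}. \<Sum>B\<in>P. uniform_block_matrix X Y (i, A) (j, B) * v (j, B))"
    by (simp add: sum.cartesian_product case_prod_beta)
  also have "\<dots> = (\<Sum>j\<in>{0..<n}. \<Sum>B\<in>P. X A B * v (j, B) + (if i = j then Y A B * v (j, B) else 0))"
    by (intro sum.cong refl) (simp add: uniform_block_matrix_def distrib_right)
  also have "\<dots> = (\<Sum>j\<in>{0..<n}. \<Sum>B\<in>P. X A B * v (j, B))
      + (\<Sum>j\<in>{0..<n}. \<Sum>B\<in>P. if i = j then Y A B * v (j, B) else 0)"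
    by (simp add: sum.distrib)
  also have "(\<Sum>j\<in>{0..<n}. \<Sum>B\<in>P. X A B * v (j, B)) = (\<Sum>B\<in>P. X A B * (\<Sum>j<n. v (j, B)))"
    by (subst sum.swap) (simp add: sum_distrib_left atLeast0LessThan)
  also have "(\<Sum>j\<in>{0..<n}. \<Sum>B\<in>P. if i = j then Y A B * v (j, B) else 0) = (\<Sum>B\<in>P. Y A B * v (i, B))"
    by (subst sum.swap) (simp add: sum.delta assms)
  finally show ?thesis .
qed

lemma uniform_block_matrix_mult_product:
  assumes "finite P" and "i < n"
  shows "(\<Sum>q\<in>{0..<n} \<times> P. uniform_block_matrix X Y (i, A) q * (c (fst q) * u (snd q))) =
    (\<Sum>j<n. c j) * (\<Sum>B\<in>P. X A B * u B) + c i * (\<Sum>B\<in>P. Y A B * u B)"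
proof -
  have "(\<Sum>j<n. c j * u B) = (\<Sum>j<n. c j) * u B" for B by (simp add: sum_distrib_right)
  then show ?thesis
    using uniform_block_matrix_row_sum[OF assms, of X Y A "\<lambda>q. c (fst q) * u (snd q)"]
    by (simp add: sum_distrib_left mult_ac)
qed

lemma uniform_block_eigenvalues_subset:
  assumes "finite P"
  shows "matrix_eigenvalues ({0..<n} \<times> P) (uniform_block_matrix X Y) \<subseteq>
    matrix_eigenvalues P Y \<union> matrix_eigenvalues P (\<lambda>A B. real n * X A B + Y A B)"
proof
  fix \<mu> assume "\<mu> \<in> matrix_eigenvalues ({0..<n} \<times> P) (uniform_block_matrix X Y)"
  then obtain v q0 where v0: "\<And>q. q \<notin> {0..<n} \<times> P \<Longrightarrow> v q = 0" and q0: "q0 \<in> {0..<n} \<times> P" "v q0 \<noteq> 0"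
    and eig: "\<And>q. q \<in> {0..<n} \<times> P \<Longrightarrow> (\<Sum>q'\<in>{0..<n} \<times> P. uniform_block_matrix X Y q q' * v q') = \<mu> * v q"
    by (elim matrix_eigenvaluesE) blast
  define w where "w B = (\<Sum>j<n. v (j, B))" for B
  have row: "(\<Sum>B\<in>P. X A B * w B) + (\<Sum>B\<in>P. Y A B * v (i, B)) = \<mu> * v (i, A)"
    if "i < n" "A \<in> P" for i A
    using eig[of "(i, A)"] uniform_block_matrix_row_sum[OF assms that(1)] that by (simp add: w_def)
  show "\<mu> \<in> matrix_eigenvalues P Y \<union> matrix_eigenvalues P (\<lambda>A B. real n * X A B + Y A B)"
  proof (cases "\<exists>A\<in>P. w A \<noteq> 0")
    case True
    have "(\<Sum>B\<in>P. (real n * X A B + Y A B) * w B) = \<mu> * w A" if "A \<in> P" for A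
    proof -
      have "(\<Sum>i<n. (\<Sum>B\<in>P. X A B * w B) + (\<Sum>B\<in>P. Y A B * v (i, B))) = \<mu> * w A"
        using row that by (simp add: w_def sum_distrib_left)
      then show ?thesis
        by (simp add: w_def sum.distrib sum_distrib_left sum_distrib_right sum.swap[of _ "{..<n}"] algebra_simps)
    qed
    moreover have "w B = 0" if "B \<notin> P" for B using v0 that by (simp add: w_def)
    ultimately have "\<mu> \<in> matrix_eigenvalues P (\<lambda>A B. real n * X A B + Y A B)"
      using True by (auto intro: matrix_eigenvaluesI[where v = w])
    then show ?thesis by blast
  next
    case False
    obtain i A where "q0 = (i, A)" "i < n" "A \<in> P" using q0 by auto
    then have "\<mu> \<in> matrix_eigenvalues P Y"
      using row False q0 v0
      by (intro matrix_eigenvaluesI[where v = "\<lambda>B. v (i, B)" and a = A]) auto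
    then show ?thesis by blast
  qed
qed

lemma uniform_block_eigenvalue_of_diagonal:
  assumes P: "finite P" and n: "n \<ge> 2" and "\<mu> \<in> matrix_eigenvalues P Y"
  shows "\<mu> \<in> matrix_eigenvalues ({0..<n} \<times> P) (uniform_block_matrix X Y)"
proof -
  obtain u A where u: "\<And>B. B \<notin> P \<Longrightarrow> u B = 0" "A \<in> P" "u A \<noteq> 0"
    and eig: "\<And>A. A \<in> P \<Longrightarrow> (\<Sum>B\<in>P. Y A B * u B) = \<mu> * u A"
    using assms(3) by (elim matrix_eigenvaluesE) blast
  \<comment> \<open>block weights with zero sum annihilate the \<open>J\<^sub>n \<otimes> X\<close> part; this needs \<open>n \<ge> 2\<close>\<close>
  define c where "c i = (if i = 0 then 1 else if i = 1 then -1 else 0 :: real)" for i :: nat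
  have "(\<Sum>j<n. c j) = (\<Sum>j\<in>{0, 1}. c j)"
    using n by (intro sum.mono_neutral_right) (auto simp: c_def)
  then have "(\<Sum>j<n. c j) = 0" by (simp add: c_def)
  then have "(\<Sum>q\<in>{0..<n} \<times> P. uniform_block_matrix X Y p q * (c (fst q) * u (snd q))) =
      \<mu> * (c (fst p) * u (snd p))" if "p \<in> {0..<n} \<times> P" for p
    using that uniform_block_matrix_mult_product[OF P, of "fst p" n X Y "snd p" c u] eig[of "snd p"]
    by (auto simp: mult_ac)
  moreover have "c (fst q) * u (snd q) = 0" if "q \<notin> {0..<n} \<times> P" for q
    using that u(1) n by (cases q) (auto simp: c_def)
  ultimately show ?thesis
    using u(2,3) n
    by (intro matrix_eigenvaluesI[where v = "\<lambda>q. c (fst q) * u (snd q)" and a = "(0, A)"]) (auto simp: c_def)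
qed

lemma uniform_block_eigenvalue_of_sum:
  assumes P: "finite P" and n: "n \<ge> 1" and "\<mu> \<in> matrix_eigenvalues P (\<lambda>A B. real n * X A B + Y A B)"
  shows "\<mu> \<in> matrix_eigenvalues ({0..<n} \<times> P) (uniform_block_matrix X Y)"
proof -
  obtain u A where u: "\<And>B. B \<notin> P \<Longrightarrow> u B = 0" "A \<in> P" "u A \<noteq> 0"
    and eig: "\<And>A. A \<in> P \<Longrightarrow> (\<Sum>B\<in>P. (real n * X A B + Y A B) * u B) = \<mu> * u A"
    using assms(3) by (elim matrix_eigenvaluesE) blast
  let ?c = "\<lambda>i. if i < n then 1 else 0 :: real"
  have "(\<Sum>B\<in>P. (real n * X A B + Y A B) * u B) = real n * (\<Sum>B\<in>P. X A B * u B) + (\<Sum>B\<in>P. Y A B * u B)" for A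
    by (simp add: distrib_right sum.distrib sum_distrib_left mult.assoc)
  then have "(\<Sum>q\<in>{0..<n} \<times> P. uniform_block_matrix X Y p q * (?c (fst q) * u (snd q))) =
      \<mu> * (?c (fst p) * u (snd p))" if "p \<in> {0..<n} \<times> P" for p
    using that uniform_block_matrix_mult_product[OF P, of "fst p" n X Y "snd p" ?c u] eig[of "snd p"]
    by auto
  moreover have "?c (fst q) * u (snd q) = 0" if "q \<notin> {0..<n} \<times> P" for q
    using that u(1) by (cases q) auto
  ultimately show ?thesis
    using u(2,3) n
    by (intro matrix_eigenvaluesI[where v = "\<lambda>q. ?c (fst q) * u (snd q)" and a = "(0, A)"]) auto
qed

lemma uniform_block_eigenvalues:
  assumes "finite P" and "n \<ge> 2"
  shows "matrix_eigenvalues ({0..<n} \<times> P) (uniform_block_matrix X Y) =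
    matrix_eigenvalues P Y \<union> matrix_eigenvalues P (\<lambda>A B. real n * X A B + Y A B)"
proof (intro equalityI uniform_block_eigenvalues_subset[OF assms(1)] Un_least subsetI)
  show "\<mu> \<in> matrix_eigenvalues ({0..<n} \<times> P) (uniform_block_matrix X Y)"
    if "\<mu> \<in> matrix_eigenvalues P Y" for \<mu>
    using uniform_block_eigenvalue_of_diagonal[OF assms that] .
  show "\<mu> \<in> matrix_eigenvalues ({0..<n} \<times> P) (uniform_block_matrix X Y)"
    if "\<mu> \<in> matrix_eigenvalues P (\<lambda>A B. real n * X A B + Y A B)" for \<mu>
    using uniform_block_eigenvalue_of_sum[OF assms(1) _ that] assms(2) by simp
qed

section \<open>Walks\<close>

lemma walk_of_length_0: "walk_of_length V E x y 0 \<longleftrightarrow> x = y \<and> x \<in> V"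
  unfolding walk_of_length_def by auto

lemma walk_of_length_Suc:
  "walk_of_length V E x z (Suc k) \<longleftrightarrow> x \<in> V \<and> (\<exists>y. E x y \<and> walk_of_length V E y z k)"
proof
  assume "walk_of_length V E x z (Suc k)"
  then obtain p where p: "p 0 = x" "p (Suc k) = z" "\<forall>i\<le>Suc k. p i \<in> V" "\<forall>i<Suc k. E (p i) (p (Suc i))"
    unfolding walk_of_length_def by blast
  then have "walk_of_length V E (p 1) z k"
    unfolding walk_of_length_def by (intro exI[of _ "\<lambda>i. p (Suc i)"]) auto
  then show "x \<in> V \<and> (\<exists>y. E x y \<and> walk_of_length V E y z k)" using p by force
next
  assume "x \<in> V \<and> (\<exists>y. E x y \<and> walk_of_length V E y z k)"
  then obtain y p where p: "x \<in> V" "E x y" "p 0 = y" "p k = z" "\<forall>i\<le>k. p i \<in> V" "\<forall>i<k. E (p i) (p (Suc i))"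
    unfolding walk_of_length_def by blast
  define q where "q i = (if i = 0 then x else p (i - 1))" for i
  have "q i \<in> V" if "i \<le> Suc k" for i
    using p that by (cases i) (auto simp: q_def)
  moreover have "E (q i) (q (Suc i))" if "i < Suc k" for i
    using p that by (cases i) (auto simp: q_def)
  ultimately show "walk_of_length V E x z (Suc k)"
    unfolding walk_of_length_def using p by (intro exI[of _ q]) (auto simp: q_def)
qed

lemma walk_of_length_start: "walk_of_length V E x y k \<Longrightarrow> x \<in> V"
  unfolding walk_of_length_def by auto

lemma walk_of_length_kron:
  "walk_of_length (kron_verts V1 V2) (kron_adj E1 E2) (a, c) (b, d) k \<longleftrightarrow>
     walk_of_length V1 E1 a b k \<and> walk_of_length V2 E2 c d k"
proof (induction k arbitrary: a c)
  case 0
  then show ?case by (auto simp: walk_of_length_0 kron_verts_def)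
next
  case (Suc k)
  then show ?case by (auto simp: walk_of_length_Suc kron_verts_def kron_adj_def)
qed

lemma walk_of_length_complete:
  assumes n: "n \<ge> 3" and i: "i < n" and j: "j < n"
  shows "walk_of_length (complete_verts n) complete_adj i j k \<longleftrightarrow> (k = 0 \<longrightarrow> i = j) \<and> (k = 1 \<longrightarrow> i \<noteq> j)"
  using i
proof (induction k arbitrary: i)
  case 0
  then show ?case by (simp add: walk_of_length_0 complete_verts_def)
next
  case (Suc k)
  show ?case
  proof
    assume "walk_of_length (complete_verts n) complete_adj i j (Suc k)"
    then obtain c where "i \<noteq> c" "walk_of_length (complete_verts n) complete_adj c j k"
      by (auto simp: walk_of_length_Suc complete_adj_def)
    then show "(Suc k = 0 \<longrightarrow> i = j) \<and> (Suc k = 1 \<longrightarrow> i \<noteq> j)" by (auto simp: walk_of_length_0)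
  next
    assume ij: "(Suc k = 0 \<longrightarrow> i = j) \<and> (Suc k = 1 \<longrightarrow> i \<noteq> j)"
    have "card {i, j} \<le> 2" by (cases "i = j") auto
    then have "\<not> {0..<n} \<subseteq> {i, j}" using n card_mono[of "{i, j}" "{0..<n}"] by auto
    then obtain c0 where "c0 \<in> {0..<n}" "c0 \<notin> {i, j}" by blast
    then obtain c where "c < n" "c \<noteq> i" "k = 0 \<longrightarrow> c = j" "k = 1 \<longrightarrow> c \<noteq> j"
      using ij j by (cases "k = 0") auto
    then have "walk_of_length (complete_verts n) complete_adj c j k" using Suc.IH[of c] by simp
    then show "walk_of_length (complete_verts n) complete_adj i j (Suc k)"
      unfolding walk_of_length_Suc using Suc.prems \<open>c \<noteq> i\<close>
      by (auto simp: complete_verts_def complete_adj_def)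
  qed
qed

section \<open>Shadow and shade sums of set functions\<close>

lemma johnson_verts_iff: "A \<in> johnson_verts m r \<longleftrightarrow> A \<subseteq> {0..<m} \<and> card A = r"
  by (simp add: johnson_verts_def)

lemma finite_johnson_verts: "finite (johnson_verts m r)"
  unfolding johnson_verts_def by (rule finite_subset[of _ "Pow {0..<m}"]) auto

lemma card_johnson_verts: "card (johnson_verts m r) = m choose r"
  unfolding johnson_verts_def using n_subsets[of "{0..<m}" r] by simp

lemma finite_subset_atLeastLessThan: "A \<subseteq> {0..<m::nat} \<Longrightarrow> finite A"
  by (meson finite_atLeastLessThan finite_subset)

definition shade_sum :: "nat \<Rightarrow> (nat set \<Rightarrow> real) \<Rightarrow> nat set \<Rightarrow> real" where
  "shade_sum m f T = (\<Sum>x\<in>{0..<m} - T. f (insert x T))"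

definition shadow_sum :: "(nat set \<Rightarrow> real) \<Rightarrow> nat set \<Rightarrow> real" where
  "shadow_sum f S = (\<Sum>x\<in>S. f (S - {x}))"

definition exchange_sum :: "nat \<Rightarrow> (nat set \<Rightarrow> real) \<Rightarrow> nat set \<Rightarrow> real" where
  "exchange_sum m f A = (\<Sum>x\<in>A. \<Sum>y\<in>{0..<m} - A. f (insert y (A - {x})))"

definition superset_sum :: "nat \<Rightarrow> nat \<Rightarrow> (nat set \<Rightarrow> real) \<Rightarrow> nat set \<Rightarrow> real" where
  "superset_sum m j f T = (\<Sum>S\<in>{S \<in> johnson_verts m (card T + j). T \<subseteq> S}. f S)"

lemma shadow_sum_shade_sum:
  assumes "A \<subseteq> {0..<m}"
  shows "shadow_sum (shade_sum m f) A = real (card A) * f A + exchange_sum m f A"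
proof -
  have "shade_sum m f (A - {x}) = f A + (\<Sum>y\<in>{0..<m} - A. f (insert y (A - {x})))"
    if x: "x \<in> A" for x
  proof -
    have "{0..<m} - (A - {x}) = insert x ({0..<m} - A)" using x assms by auto
    moreover have "x \<notin> {0..<m} - A" using x by auto
    ultimately have "shade_sum m f (A - {x}) = f (insert x (A - {x})) + (\<Sum>y\<in>{0..<m} - A. f (insert y (A - {x})))"
      unfolding shade_sum_def by simp
    also have "insert x (A - {x}) = A" using x by auto
    finally show ?thesis .
  qed
  then show ?thesis
    unfolding shadow_sum_def exchange_sum_def by (simp add: sum.distrib)
qed

lemma shade_sum_shadow_sum:
  assumes "A \<subseteq> {0..<m}"
  shows "shade_sum m (shadow_sum f) A = (real m - real (card A)) * f A + exchange_sum m f A"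
proof -
  have fin: "finite A" using assms by (rule finite_subset_atLeastLessThan)
  have "shadow_sum f (insert y A) = f A + (\<Sum>x\<in>A. f (insert y (A - {x})))"
    if y: "y \<in> {0..<m} - A" for y
  proof -
    have "shadow_sum f (insert y A) = f (insert y A - {y}) + (\<Sum>x\<in>A. f (insert y A - {x}))"
      unfolding shadow_sum_def using y fin by (subst sum.insert) auto
    also have "insert y A - {y} = A" using y by auto
    also have "(\<Sum>x\<in>A. f (insert y A - {x})) = (\<Sum>x\<in>A. f (insert y (A - {x})))"
      using y by (intro sum.cong refl) (metis Diff_iff insert_Diff_if singletonD)
    finally show ?thesis .
  qed
  then have "shade_sum m (shadow_sum f) A = (\<Sum>y\<in>{0..<m} - A. f A + (\<Sum>x\<in>A. f (insert y (A - {x}))))"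
    unfolding shade_sum_def by simp
  also have "\<dots> = real (card ({0..<m} - A)) * f A + exchange_sum m f A"
    unfolding exchange_sum_def by (simp add: sum.distrib sum.swap[of _ A])
  also have "real (card ({0..<m} - A)) = real m - real (card A)"
    using assms fin card_mono[OF _ assms] by (simp add: card_Diff_subset of_nat_diff)
  finally show ?thesis .
qed

lemma shade_sum_cong:
  assumes "T \<in> johnson_verts m k" "\<And>S. S \<in> johnson_verts m (Suc k) \<Longrightarrow> f S = g S"
  shows "shade_sum m f T = shade_sum m g T"
  unfolding shade_sum_def
proof (rule sum.cong[OF refl])
  fix x assume "x \<in> {0..<m} - T"
  moreover have "finite T" using assms(1) finite_subset_atLeastLessThan[of T m]
    by (simp add: johnson_verts_iff)
  ultimately show "f (insert x T) = g (insert x T)"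
    using assms by (intro assms(2)) (auto simp: johnson_verts_iff)
qed

lemma shadow_sum_cong:
  assumes "S \<in> johnson_verts m (Suc k)" "\<And>T. T \<in> johnson_verts m k \<Longrightarrow> f T = g T"
  shows "shadow_sum f S = shadow_sum g S"
  unfolding shadow_sum_def
proof (rule sum.cong[OF refl])
  fix x assume "x \<in> S"
  then show "f (S - {x}) = g (S - {x})"
    using assms by (intro assms(2)) (auto simp: johnson_verts_iff card_Diff_singleton)
qed

lemma superset_sum_cong:
  assumes "\<And>S. S \<in> johnson_verts m (card T + j) \<Longrightarrow> f S = g S"
  shows "superset_sum m j f T = superset_sum m j g T"
  unfolding superset_sum_def using assms by (intro sum.cong) auto

lemma superset_sum_mult: "superset_sum m j (\<lambda>S. c * f S) T = c * superset_sum m j f T"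
  unfolding superset_sum_def by (simp add: sum_distrib_left)

lemma superset_sum_0:
  assumes "T \<subseteq> {0..<m}"
  shows "superset_sum m 0 f T = f T"
proof -
  have "S = T" if "S \<in> johnson_verts m (card T)" "T \<subseteq> S" for S
    using that card_subset_eq[of S T] finite_subset_atLeastLessThan[of S m]
    by (simp add: johnson_verts_iff)
  then have "{S \<in> johnson_verts m (card T + 0). T \<subseteq> S} = {T}"
    using assms by (auto simp: johnson_verts_iff)
  then show ?thesis unfolding superset_sum_def by simp
qed

lemma superset_sum_empty: "superset_sum m r v {} = (\<Sum>B\<in>johnson_verts m r. v B)"
  unfolding superset_sum_def by simp

lemma superset_sum_singleton:
  assumes "x < m" "r \<ge> 1"
  shows "superset_sum m (r - 1) v {x} = (\<Sum>B\<in>johnson_verts m r. if x \<in> B then v B else 0)"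
  unfolding superset_sum_def using assms by (simp add: sum.inter_filter[OF finite_johnson_verts])

lemma bij_betw_insert_pairs:
  assumes "T \<subseteq> {0..<m}"
  shows "bij_betw (\<lambda>(S, x). (insert x S, x))
           (SIGMA S:{S \<in> johnson_verts m (card T + j). T \<subseteq> S}. {0..<m} - S)
           (SIGMA S:{S \<in> johnson_verts m (card T + Suc j). T \<subseteq> S}. S - T)"
proof (rule bij_betw_byWitness[where f' = "\<lambda>(S, x). (S - {x}, x)"], safe)
  fix S x assume S: "S \<in> johnson_verts m (card T + j)" and x: "x \<in> {0..<m}" "x \<notin> S"
  then have "card (insert x S) = card T + Suc j"
    using finite_subset_atLeastLessThan[of S m] by (simp add: johnson_verts_iff)
  then show "insert x S \<in> johnson_verts m (card T + Suc j)"
    using S x by (simp add: johnson_verts_iff)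
next
  fix S x assume "S \<in> johnson_verts m (card T + Suc j)" "x \<in> S"
  then show "S - {x} \<in> johnson_verts m (card T + j)"
    by (auto simp: johnson_verts_iff card_Diff_singleton)
next
  fix S x assume "S \<in> johnson_verts m (card T + Suc j)" "x \<in> S"
  then show "x \<in> {0..<m}" by (auto simp: johnson_verts_iff)
qed (auto simp: insert_absorb)

text \<open>Double counting: a set \<open>S \<supseteq> T\<close> of size \<open>card T + j + 1\<close> arises as \<open>insert x S'\<close> from
  exactly \<open>j + 1\<close> pairs \<open>(S', x)\<close>, one for each \<open>x \<in> S - T\<close>.\<close>
lemma superset_sum_shade_sum:
  assumes T: "T \<subseteq> {0..<m}"
  shows "superset_sum m j (shade_sum m f) T = real (Suc j) * superset_sum m (Suc j) f T"
proof -
  let ?F = "\<lambda>j. {S \<in> johnson_verts m (card T + j). T \<subseteq> S}"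
  have fin: "finite (?F j)" for j using finite_johnson_verts by simp
  have "superset_sum m j (shade_sum m f) T = (\<Sum>(S, x)\<in>(SIGMA S:?F j. {0..<m} - S). f (insert x S))"
    unfolding superset_sum_def shade_sum_def by (rule sum.Sigma) (use fin in auto)
  also have "\<dots> = (\<Sum>(S, x)\<in>(SIGMA S:?F (Suc j). S - T). f S)"
    using sum.reindex_bij_betw[OF bij_betw_insert_pairs[OF T, of j], of "\<lambda>(S, x). f S"]
    by (simp add: case_prod_beta)
  also have "\<dots> = (\<Sum>S\<in>?F (Suc j). \<Sum>x\<in>S - T. f S)"
    by (rule sum.Sigma[symmetric]) (auto simp: fin johnson_verts_iff intro: finite_subset_atLeastLessThan)
  also have "\<dots> = (\<Sum>S\<in>?F (Suc j). real (Suc j) * f S)"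
  proof (rule sum.cong[OF refl])
    fix S assume "S \<in> ?F (Suc j)"
    moreover have "finite T" using T by (rule finite_subset_atLeastLessThan)
    ultimately have "card (S - T) = Suc j" by (simp add: johnson_verts_iff card_Diff_subset)
    then show "(\<Sum>x\<in>S - T. f S) = real (Suc j) * f S" by simp
  qed
  finally show ?thesis unfolding superset_sum_def by (simp add: sum_distrib_left)
qed

lemma shade_shadow_commute:
  assumes "A \<subseteq> {0..<m}"
  shows "shade_sum m (shadow_sum f) A = shadow_sum (shade_sum m f) A + (real m - 2 * real (card A)) * f A"
  using shadow_sum_shade_sum[OF assms] shade_sum_shadow_sum[OF assms] by (simp add: algebra_simps)

lemma shadow_shade_shadow_sum:
  assumes eig: "\<And>A. A \<in> johnson_verts m k \<Longrightarrow> shadow_sum (shade_sum m f) A = \<theta> * f A"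
    and S: "S \<in> johnson_verts m (Suc k)"
  shows "shadow_sum (shade_sum m (shadow_sum f)) S = (\<theta> + real m - 2 * real k) * shadow_sum f S"
proof -
  have "shade_sum m (shadow_sum f) A = (\<theta> + real m - 2 * real k) * f A"
    if A: "A \<in> johnson_verts m k" for A
    using A eig[OF A] shade_shadow_commute[of A m f] by (simp add: johnson_verts_iff algebra_simps)
  then have "shadow_sum (shade_sum m (shadow_sum f)) S = shadow_sum (\<lambda>A. (\<theta> + real m - 2 * real k) * f A) S"
    by (rule shadow_sum_cong[OF S])
  then show ?thesis by (simp add: shadow_sum_def sum_distrib_left)
qed

lemma shadow_shade_shade_sum:
  assumes eig: "\<And>A. A \<in> johnson_verts m (Suc k) \<Longrightarrow> shadow_sum (shade_sum m f) A = \<theta> * f A"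
    and T: "T \<in> johnson_verts m k"
  shows "shadow_sum (shade_sum m (shade_sum m f)) T = (\<theta> - (real m - 2 * real k)) * shade_sum m f T"
proof -
  have "shade_sum m (shadow_sum (shade_sum m f)) T = \<theta> * shade_sum m f T"
    using shade_sum_cong[OF T eig] by (simp add: shade_sum_def sum_distrib_left)
  then show ?thesis
    using T shade_shadow_commute[of T m "shade_sum m f"] by (simp add: johnson_verts_iff algebra_simps)
qed

lemma superset_sum_shadow_sum:
  assumes T: "T \<subseteq> {0..<m}"
    and eig: "\<And>B. B \<in> johnson_verts m (card T + l) \<Longrightarrow> shade_sum m (shadow_sum f) B = \<theta> * f B"
  shows "real (Suc l) * superset_sum m (Suc l) (shadow_sum f) T = \<theta> * superset_sum m l f T"
proof -
  have "real (Suc l) * superset_sum m (Suc l) (shadow_sum f) T = superset_sum m l (shade_sum m (shadow_sum f)) T"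
    using superset_sum_shade_sum[OF T] by simp
  also have "\<dots> = superset_sum m l (\<lambda>S. \<theta> * f S) T"
    by (rule superset_sum_cong) (rule eig)
  finally show ?thesis by (simp add: superset_sum_mult)
qed

definition shadow_shade_eigenvalue :: "nat \<Rightarrow> nat \<Rightarrow> nat \<Rightarrow> real" where
  "shadow_shade_eigenvalue m k i = (real k - real i) * (real m - real k - real i + 1)"

lemma shadow_shade_eigenvalue_Suc:
  "shadow_shade_eigenvalue m (Suc k) i = shadow_shade_eigenvalue m k i + (real m - 2 * real k)"
  unfolding shadow_shade_eigenvalue_def by (simp add: algebra_simps)

lemma shadow_shade_eigenvalue_cases:
  assumes "A \<in> johnson_verts m k" "f A \<noteq> 0"
    and "\<And>A. A \<in> johnson_verts m k \<Longrightarrow> shadow_sum (shade_sum m f) A = \<theta> * f A"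
    and "\<And>T. T \<subseteq> {0..<m} \<Longrightarrow> card T + j = k \<Longrightarrow> superset_sum m j f T = 0"
  shows "\<exists>i\<le>k. k < i + j \<and> \<theta> = shadow_shade_eigenvalue m k i"
proof -
  have j_pos: "j \<noteq> 0"
    if "A \<in> johnson_verts m k" "f A \<noteq> 0" "\<And>T. T \<subseteq> {0..<m} \<Longrightarrow> card T + j = k \<Longrightarrow> superset_sum m j f T = 0"
    for A f j k
    using that(3)[of A] superset_sum_0[of A m f] that(1,2) by (auto simp: johnson_verts_iff)
  from assms show ?thesis
  proof (induction k arbitrary: A f \<theta> j)
    case 0
    then have "A = {}" using finite_subset_atLeastLessThan by (auto simp: johnson_verts_iff)
    then have "\<theta> * f A = 0" using "0.prems"(3)[OF "0.prems"(1)] by (simp add: shadow_sum_def)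
    then have "\<theta> = 0" using "0.prems"(2) by simp
    then show ?case using j_pos[OF "0.prems"(1,2,4)] by (simp add: shadow_shade_eigenvalue_def)
  next
    case (Suc k)
    have j: "j \<noteq> 0" using j_pos[OF Suc.prems(1,2,4)] .
    show ?case
    proof (cases "\<theta> = 0")
      case True
      then show ?thesis using j by (intro exI[of _ "Suc k"]) (simp add: shadow_shade_eigenvalue_def)
    next
      case False
      let ?g = "shade_sum m f"
      have "\<exists>B\<in>johnson_verts m k. ?g B \<noteq> 0"
      proof (rule ccontr)
        assume "\<not> ?thesis"
        then have "shadow_sum ?g A = shadow_sum (\<lambda>_. 0) A"
          by (intro shadow_sum_cong[OF Suc.prems(1)]) auto
        then show False using Suc.prems(1-3) False by (simp add: shadow_sum_def)
      qed
      then obtain B where B: "B \<in> johnson_verts m k" "?g B \<noteq> 0" by blast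
      have "superset_sum m (j - 1) ?g T = 0" if "T \<subseteq> {0..<m}" "card T + (j - 1) = k" for T
        using superset_sum_shade_sum[OF that(1), of "j - 1" f] Suc.prems(4)[OF that(1)] that(2) j
        by simp
      then obtain i where "i \<le> k" "k < i + (j - 1)"
        and "\<theta> - (real m - 2 * real k) = shadow_shade_eigenvalue m k i"
        using Suc.IH[where f = ?g, OF B shadow_shade_shade_sum[OF Suc.prems(3)]] by blast
      then show ?thesis using j
        by (intro exI[of _ i]) (simp add: shadow_shade_eigenvalue_Suc)
    qed
  qed
qed

definition pair_sign :: "nat \<Rightarrow> nat set \<Rightarrow> real" where
  "pair_sign j S = (if 2 * j \<in> S then 1 else 0) - (if Suc (2 * j) \<in> S then 1 else 0)"

definition pair_sign_prod :: "nat \<Rightarrow> nat set \<Rightarrow> real" where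
  "pair_sign_prod i S = (\<Prod>j<i. pair_sign j S)"

lemma pair_sign_prod_eq_0:
  assumes "finite T" "card T < i"
  shows "pair_sign_prod i T = 0"
proof (rule ccontr)
  assume "pair_sign_prod i T \<noteq> 0"
  then have nz: "pair_sign j T \<noteq> 0" if "j < i" for j
    using that by (auto simp: pair_sign_prod_def)
  define \<phi> where "\<phi> j = (if 2 * j \<in> T then 2 * j else Suc (2 * j))" for j
  have "inj_on \<phi> {..<i}"
    by (rule inj_on_inverseI[where g = "\<lambda>x. x div 2"]) (simp add: \<phi>_def)
  moreover have "\<phi> j \<in> T" if "j < i" for j
    using nz[OF that] by (auto simp: \<phi>_def pair_sign_def split: if_splits)
  then have "\<phi> ` {..<i} \<subseteq> T" by auto
  ultimately have "card {..<i} \<le> card T" using card_inj_on_le assms(1) by blast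
  then show False using assms(2) by simp
qed

lemma sum_lessThan_double_pairs: "(\<Sum>x<2 * i. h x) = (\<Sum>j<i. h (2 * j) + h (Suc (2 * j)))"
  by (induction i) (simp_all add: algebra_simps)

lemma pair_sign_insert_other: "x \<noteq> 2 * j \<Longrightarrow> x \<noteq> Suc (2 * j) \<Longrightarrow> pair_sign j (insert x T) = pair_sign j T"
  unfolding pair_sign_def by auto

text \<open>Adding \<open>x \<ge> 2 i\<close> to an \<open>(i - 1)\<close>-set leaves a pair \<open>{2 j, 2 j + 1}\<close> with \<open>j < i\<close> untouched,
  so the product vanishes; the terms for \<open>x = 2 j\<close> and \<open>x = 2 j + 1\<close> cancel.\<close>
lemma shade_sum_pair_sign_prod:
  assumes m: "2 * i \<le> m" and T: "T \<subseteq> {0..<m}" "card T + 1 = i"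
  shows "shade_sum m (pair_sign_prod i) T = 0"
proof -
  have finT: "finite T" using T(1) by (rule finite_subset_atLeastLessThan)
  define h where "h x = (if x \<in> T then 0 else pair_sign_prod i (insert x T))" for x
  have "shade_sum m (pair_sign_prod i) T = (\<Sum>x\<in>{0..<m}. h x)"
    unfolding shade_sum_def by (rule sum.mono_neutral_cong_left) (auto simp: h_def)
  also have "\<dots> = (\<Sum>x\<in>{0..<2 * i}. h x) + (\<Sum>x\<in>{2 * i..<m}. h x)"
    using sum.atLeastLessThan_concat[of 0 "2 * i" m h] m by simp
  also have "(\<Sum>x\<in>{2 * i..<m}. h x) = 0"
  proof (rule sum.neutral, rule ballI)
    fix x assume x: "x \<in> {2 * i..<m}"
    have "pair_sign_prod i (insert x T) = pair_sign_prod i T"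
      unfolding pair_sign_prod_def using x by (intro prod.cong refl pair_sign_insert_other) auto
    then show "h x = 0" using pair_sign_prod_eq_0[OF finT] T by (simp add: h_def)
  qed
  also have "(\<Sum>x\<in>{0..<2 * i}. h x) = (\<Sum>j<i. h (2 * j) + h (Suc (2 * j)))"
    using sum_lessThan_double_pairs[of h i] by (simp add: lessThan_atLeast0)
  also have "\<dots> = 0"
  proof (rule sum.neutral, rule ballI)
    fix j assume j: "j \<in> {..<i}"
    define P where "P = (\<Prod>l\<in>{..<i} - {j}. pair_sign l T)"
    have split: "pair_sign_prod i (insert x T) = pair_sign j (insert x T) * P"
      if "x = 2 * j \<or> x = Suc (2 * j)" for x
    proof -
      have "pair_sign_prod i (insert x T) = pair_sign j (insert x T) * (\<Prod>l\<in>{..<i} - {j}. pair_sign l (insert x T))"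
        unfolding pair_sign_prod_def using j by (simp add: prod.remove)
      also have "(\<Prod>l\<in>{..<i} - {j}. pair_sign l (insert x T)) = P"
        unfolding P_def using that by (intro prod.cong refl pair_sign_insert_other) auto
      finally show ?thesis .
    qed
    show "h (2 * j) + h (Suc (2 * j)) = 0"
      unfolding h_def using split by (simp add: pair_sign_def)
  qed
  finally show ?thesis by simp
qed

lemma shadow_shade_pair_sign_prod:
  assumes m: "2 * i \<le> m" and A: "A \<in> johnson_verts m i"
  shows "shadow_sum (shade_sum m (pair_sign_prod i)) A = 0"
proof -
  have "card (A - {x}) + 1 = i" if "x \<in> A" for x
    using A that card_Suc_Diff1[of A x] finite_subset_atLeastLessThan[of A m]
    by (simp add: johnson_verts_iff)
  then show ?thesis
    unfolding shadow_sum_def using A by (intro sum.neutral ballI shade_sum_pair_sign_prod[OF m]) (auto simp: johnson_verts_iff)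
qed

lemma superset_sum_pair_sign_prod:
  assumes m: "2 * i \<le> m" and T: "T \<subseteq> {0..<m}" "card T + Suc l = i"
  shows "superset_sum m (Suc l) (pair_sign_prod i) T = 0"
proof -
  have "real (Suc l) * superset_sum m (Suc l) (pair_sign_prod i) T = superset_sum m l (shade_sum m (pair_sign_prod i)) T"
    using superset_sum_shade_sum[OF T(1)] by simp
  also have "\<dots> = superset_sum m l (\<lambda>_. 0) T"
    using T by (intro superset_sum_cong shade_sum_pair_sign_prod[OF m]) (auto simp: johnson_verts_iff)
  finally show ?thesis by (simp add: superset_sum_def)
qed

lemma pair_sign_prod_evens: "pair_sign_prod i ((\<lambda>j. 2 * j) ` {..<i}) = 1"
proof -
  have "pair_sign j ((\<lambda>j. 2 * j) ` {..<i}) = 1" if "j < i" for j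
    using that by (auto simp: pair_sign_def) presburger
  then show ?thesis by (simp add: pair_sign_prod_def)
qed

lemma evens_in_johnson_verts:
  assumes "2 * i \<le> m"
  shows "(\<lambda>j. 2 * j) ` {..<i} \<in> johnson_verts m i"
proof -
  have "inj_on (\<lambda>j. 2 * j) {..<i}" by (rule inj_onI) simp
  then show ?thesis using assms by (auto simp: johnson_verts_iff card_image)
qed

text \<open>An element of the \<open>i\<close>-th eigenspace of the Johnson scheme on \<open>k\<close>-sets.\<close>
definition shadow_shade_eigenfunction :: "nat \<Rightarrow> nat \<Rightarrow> nat \<Rightarrow> (nat set \<Rightarrow> real) \<Rightarrow> bool" where
  "shadow_shade_eigenfunction m k i f \<longleftrightarrow>
     (\<exists>A\<in>johnson_verts m k. f A \<noteq> 0) \<and>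
     (\<forall>A\<in>johnson_verts m k. shadow_sum (shade_sum m f) A = shadow_shade_eigenvalue m k i * f A) \<and>
     (\<forall>j T. k < i + j \<longrightarrow> T \<subseteq> {0..<m} \<longrightarrow> card T + j = k \<longrightarrow> superset_sum m j f T = 0)"

lemma shadow_shade_eigenfunction_pair_sign_prod:
  assumes "2 * i \<le> m"
  shows "shadow_shade_eigenfunction m i i (pair_sign_prod i)"
proof -
  have "superset_sum m j (pair_sign_prod i) T = 0"
    if "i < i + j" "T \<subseteq> {0..<m}" "card T + j = i" for j T
    using superset_sum_pair_sign_prod[OF assms that(2), of "j - 1"] that by simp
  then show ?thesis
    using evens_in_johnson_verts[OF assms] pair_sign_prod_evens shadow_shade_pair_sign_prod[OF assms]
    unfolding shadow_shade_eigenfunction_def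
    by (intro conjI bexI[of _ "(\<lambda>j. 2 * j) ` {..<i}"]) (simp_all add: shadow_shade_eigenvalue_def)
qed

text \<open>The commutation relation makes \<open>shade_sum m \<circ> shadow_sum\<close> act on \<open>f\<close> by the nonzero scalar
  \<open>shadow_shade_eigenvalue m (Suc k) i\<close>, so \<open>shadow_sum f\<close> does not vanish.\<close>
lemma shadow_shade_eigenfunction_shadow_sum:
  assumes m: "2 * Suc k \<le> m" and i: "i \<le> k" and f: "shadow_shade_eigenfunction m k i f"
  shows "shadow_shade_eigenfunction m (Suc k) i (shadow_sum f)"
proof -
  obtain A where A: "A \<in> johnson_verts m k" "f A \<noteq> 0"
    and eig: "\<forall>A\<in>johnson_verts m k. shadow_sum (shade_sum m f) A = shadow_shade_eigenvalue m k i * f A"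
    and sup: "\<forall>j T. k < i + j \<longrightarrow> T \<subseteq> {0..<m} \<longrightarrow> card T + j = k \<longrightarrow> superset_sum m j f T = 0"
    using f unfolding shadow_shade_eigenfunction_def by blast
  define \<theta> where "\<theta> = shadow_shade_eigenvalue m (Suc k) i"
  have "\<theta> > 0" using m i unfolding \<theta>_def shadow_shade_eigenvalue_def by simp
  have shade_shadow: "shade_sum m (shadow_sum f) B = \<theta> * f B" if "B \<in> johnson_verts m k" for B
    using that bspec[OF eig that] shade_shadow_commute[of B m f]
    by (simp add: johnson_verts_iff \<theta>_def shadow_shade_eigenvalue_Suc algebra_simps)
  then have "shade_sum m (shadow_sum f) A \<noteq> 0" using A \<open>\<theta> > 0\<close> by simp
  then obtain x where x: "x \<in> {0..<m} - A" "shadow_sum f (insert x A) \<noteq> 0"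
    unfolding shade_sum_def using sum.neutral by (metis (no_types, lifting))
  then have "insert x A \<in> johnson_verts m (Suc k)"
    using A(1) finite_subset_atLeastLessThan[of A m] by (auto simp: johnson_verts_iff)
  moreover have "shadow_sum (shade_sum m (shadow_sum f)) B = \<theta> * shadow_sum f B"
    if "B \<in> johnson_verts m (Suc k)" for B
    using shadow_shade_shadow_sum[OF bspec[OF eig] that]
    by (simp add: \<theta>_def shadow_shade_eigenvalue_Suc algebra_simps)
  moreover have "superset_sum m (Suc l) (shadow_sum f) T = 0"
    if "Suc k < i + Suc l" "T \<subseteq> {0..<m}" "card T + Suc l = Suc k" for l T
    using superset_sum_shadow_sum[OF that(2) shade_shadow, of l] sup that \<open>\<theta> > 0\<close> by simp
  then have "superset_sum m j (shadow_sum f) T = 0"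
    if "Suc k < i + j" "T \<subseteq> {0..<m}" "card T + j = Suc k" for j T
    using that i by (cases j) auto
  ultimately show ?thesis using x(2) unfolding shadow_shade_eigenfunction_def \<theta>_def by blast
qed

lemma shadow_shade_eigenfunction_exists:
  assumes "2 * k \<le> m" and "i \<le> k"
  shows "\<exists>f. shadow_shade_eigenfunction m k i f"
  using assms(2,1)
proof (induction k rule: dec_induct)
  case base
  then show ?case using shadow_shade_eigenfunction_pair_sign_prod by blast
next
  case (step k)
  then show ?case using shadow_shade_eigenfunction_shadow_sum[of k m i] by auto
qed

section \<open>Adjacency spectrum of the Johnson graph\<close>

definition johnson_adj_matrix :: "nat \<Rightarrow> nat set \<Rightarrow> nat set \<Rightarrow> real" where
  "johnson_adj_matrix r A B = (if johnson_adj r A B then 1 else 0)"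

lemma johnson_adj_sym: "johnson_adj r A B = johnson_adj r B A"
  unfolding johnson_adj_def by (simp add: Int_commute)

lemma johnson_adj_matrix_sym: "johnson_adj_matrix r A B = johnson_adj_matrix r B A"
  unfolding johnson_adj_matrix_def using johnson_adj_sym by metis

lemma bij_betw_johnson_exchange:
  assumes A: "A \<in> johnson_verts m r" and r: "r \<ge> 1"
  shows "bij_betw (\<lambda>(x, y). insert y (A - {x})) (A \<times> ({0..<m} - A))
           {B \<in> johnson_verts m r. johnson_adj r A B}"
proof -
  have Am: "A \<subseteq> {0..<m}" and cA: "card A = r" using A by (auto simp: johnson_verts_iff)
  have finA: "finite A" using Am by (rule finite_subset_atLeastLessThan)
  show ?thesis unfolding bij_betw_def
  proof
    show "inj_on (\<lambda>(x, y). insert y (A - {x})) (A \<times> ({0..<m} - A))"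
    proof (rule inj_onI, clarify)
      fix x y x' y'
      assume xy: "x \<in> A" "y \<notin> A" "x' \<in> A" "y' \<notin> A"
        and e: "insert y (A - {x}) = insert y' (A - {x'})"
      have "y \<in> insert y' (A - {x'})" using e by blast
      then have "y = y'" using xy by auto
      moreover have "x \<notin> insert y' (A - {x'})" using e xy by auto
      ultimately show "x = x' \<and> y = y'" using xy by auto
    qed
    show "(\<lambda>(x, y). insert y (A - {x})) ` (A \<times> ({0..<m} - A)) = {B \<in> johnson_verts m r. johnson_adj r A B}"
    proof (intro equalityI subsetI)
      fix B assume "B \<in> (\<lambda>(x, y). insert y (A - {x})) ` (A \<times> ({0..<m} - A))"
      then obtain x y where xy: "x \<in> A" "y \<in> {0..<m}" "y \<notin> A" "B = insert y (A - {x})" by auto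
      have c1: "card (A - {x}) = r - 1" using xy(1) cA by simp
      then have "card B = r" using xy finA r by simp
      moreover have "A \<inter> B = A - {x}" using xy by auto
      ultimately show "B \<in> {B \<in> johnson_verts m r. johnson_adj r A B}"
        using c1 xy Am by (auto simp: johnson_verts_iff johnson_adj_def)
    next
      fix B assume "B \<in> {B \<in> johnson_verts m r. johnson_adj r A B}"
      then have Bm: "B \<subseteq> {0..<m}" and cB: "card B = r" and cI: "card (A \<inter> B) = r - 1"
        by (auto simp: johnson_verts_iff johnson_adj_def)
      have finB: "finite B" using Bm by (rule finite_subset_atLeastLessThan)
      have "card (A - B) = 1" using card_Diff_subset_Int[of A B] finA cA cI r by simp
      then obtain x where x: "A - B = {x}" by (rule card_1_singletonE)
      have "card (B - A) = 1" using card_Diff_subset_Int[of B A] finB cB cI r by (simp add: Int_commute)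
      then obtain y where y: "B - A = {y}" by (rule card_1_singletonE)
      have "B = insert y (A - {x})" using x y by blast
      moreover have "x \<in> A" "y \<in> {0..<m} - A" using x y Bm by auto
      ultimately show "B \<in> (\<lambda>(x, y). insert y (A - {x})) ` (A \<times> ({0..<m} - A))" by force
    qed
  qed
qed

lemma johnson_adj_matrix_sum:
  assumes A: "A \<in> johnson_verts m r" and r: "r \<ge> 1"
  shows "(\<Sum>B\<in>johnson_verts m r. johnson_adj_matrix r A B * f B) = exchange_sum m f A"
proof -
  have "(\<Sum>B\<in>johnson_verts m r. johnson_adj_matrix r A B * f B) =
        (\<Sum>B\<in>{B \<in> johnson_verts m r. johnson_adj r A B}. f B)"
    unfolding sum.inter_filter[OF finite_johnson_verts]
    by (intro sum.cong) (auto simp: johnson_adj_matrix_def)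
  also have "\<dots> = (\<Sum>(x, y)\<in>A \<times> ({0..<m} - A). f (insert y (A - {x})))"
    using sum.reindex_bij_betw[OF bij_betw_johnson_exchange[OF A r], of f]
    by (simp add: case_prod_beta)
  finally show ?thesis unfolding exchange_sum_def by (simp add: sum.cartesian_product)
qed

lemma johnson_adj_matrix_sum_eq_shadow_shade:
  assumes A: "A \<in> johnson_verts m r" and r: "r \<ge> 1"
  shows "(\<Sum>B\<in>johnson_verts m r. johnson_adj_matrix r A B * f B) = shadow_sum (shade_sum m f) A - real r * f A"
  using johnson_adj_matrix_sum[OF A r] shadow_sum_shade_sum[of A m f] A
  by (simp add: johnson_verts_iff)

lemma johnson_lambda_eq: "johnson_lambda m r i = shadow_shade_eigenvalue m r i - real r"
  unfolding johnson_lambda_def shadow_shade_eigenvalue_def by (simp add: algebra_simps)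

lemma johnson_adj_eigenvalue_cases:
  assumes r: "r \<ge> 1" and A: "A \<in> johnson_verts m r" "v A \<noteq> 0"
    and eig: "\<And>A. A \<in> johnson_verts m r \<Longrightarrow>
      (\<Sum>B\<in>johnson_verts m r. johnson_adj_matrix r A B * v B) = \<mu> * v A"
    and "\<And>T. T \<subseteq> {0..<m} \<Longrightarrow> card T + j = r \<Longrightarrow> superset_sum m j v T = 0"
  shows "\<exists>i\<le>r. r < i + j \<and> \<mu> = johnson_lambda m r i"
proof -
  have "shadow_sum (shade_sum m v) B = (\<mu> + real r) * v B" if "B \<in> johnson_verts m r" for B
    using eig[OF that] johnson_adj_matrix_sum_eq_shadow_shade[OF that r, of v] by (simp add: algebra_simps)
  then show ?thesis
    using shadow_shade_eigenvalue_cases[OF A _ assms(5)] by (fastforce simp: johnson_lambda_eq)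
qed

lemma johnson_adj_eigenfunction_exists:
  assumes r: "r \<ge> 1" and m: "2 * r \<le> m" and i: "i \<le> r"
  obtains v A where "\<And>B. B \<notin> johnson_verts m r \<Longrightarrow> v B = 0" "A \<in> johnson_verts m r" "v A \<noteq> 0"
    "\<And>A. A \<in> johnson_verts m r \<Longrightarrow>
      (\<Sum>B\<in>johnson_verts m r. johnson_adj_matrix r A B * v B) = johnson_lambda m r i * v A"
    "\<And>j T. r < i + j \<Longrightarrow> T \<subseteq> {0..<m} \<Longrightarrow> card T + j = r \<Longrightarrow> superset_sum m j v T = 0"
proof -
  obtain f A where A: "A \<in> johnson_verts m r" "f A \<noteq> 0"
    and eig: "\<And>A. A \<in> johnson_verts m r \<Longrightarrow> shadow_sum (shade_sum m f) A = shadow_shade_eigenvalue m r i * f A"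
    and sup: "\<And>j T. r < i + j \<Longrightarrow> T \<subseteq> {0..<m} \<Longrightarrow> card T + j = r \<Longrightarrow> superset_sum m j f T = 0"
    using shadow_shade_eigenfunction_exists[OF m i] unfolding shadow_shade_eigenfunction_def by blast
  define v where "v B = (if B \<in> johnson_verts m r then f B else 0)" for B
  show ?thesis
  proof (rule that[of v A])
    fix B assume B: "B \<in> johnson_verts m r"
    have "(\<Sum>C\<in>johnson_verts m r. johnson_adj_matrix r B C * v C) =
          (\<Sum>C\<in>johnson_verts m r. johnson_adj_matrix r B C * f C)"
      by (intro sum.cong) (auto simp: v_def)
    then show "(\<Sum>C\<in>johnson_verts m r. johnson_adj_matrix r B C * v C) = johnson_lambda m r i * v B"
      using johnson_adj_matrix_sum_eq_shadow_shade[OF B r, of f] eig[OF B] B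
      by (simp add: v_def johnson_lambda_eq algebra_simps)
  next
    fix j T assume "r < i + j" "T \<subseteq> {0..<m}" "card T + j = r"
    moreover from this have "superset_sum m j v T = superset_sum m j f T"
      by (intro superset_sum_cong) (simp add: v_def)
    ultimately show "superset_sum m j v T = 0" using sup by simp
  qed (use A in \<open>auto simp: v_def\<close>)
qed

lemma johnson_adj_eigenvalues:
  assumes r: "r \<ge> 1" and m: "2 * r \<le> m"
  shows "matrix_eigenvalues (johnson_verts m r) (johnson_adj_matrix r) = {johnson_lambda m r i | i. i \<le> r}"
proof (intro equalityI subsetI)
  fix \<mu> assume "\<mu> \<in> matrix_eigenvalues (johnson_verts m r) (johnson_adj_matrix r)"
  then obtain v A where v: "\<And>B. B \<notin> johnson_verts m r \<Longrightarrow> v B = 0" "A \<in> johnson_verts m r" "v A \<noteq> 0"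
    "\<And>A. A \<in> johnson_verts m r \<Longrightarrow> (\<Sum>B\<in>johnson_verts m r. johnson_adj_matrix r A B * v B) = \<mu> * v A"
    by (elim matrix_eigenvaluesE) blast
  have "\<exists>i\<le>r. r < i + Suc r \<and> \<mu> = johnson_lambda m r i"
    \<comment> \<open>for \<open>j = r + 1\<close> the hypothesis on superset sums is vacuous\<close>
    by (rule johnson_adj_eigenvalue_cases[OF r v(2-4)]) auto
  then show "\<mu> \<in> {johnson_lambda m r i | i. i \<le> r}" by blast
next
  fix \<mu> assume "\<mu> \<in> {johnson_lambda m r i | i. i \<le> r}"
  then obtain i where i: "i \<le> r" "\<mu> = johnson_lambda m r i" by blast
  obtain v A where v: "\<And>B. B \<notin> johnson_verts m r \<Longrightarrow> v B = 0" "A \<in> johnson_verts m r" "v A \<noteq> 0"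
    "\<And>A. A \<in> johnson_verts m r \<Longrightarrow>
      (\<Sum>B\<in>johnson_verts m r. johnson_adj_matrix r A B * v B) = johnson_lambda m r i * v A"
    "\<And>j T. r < i + j \<Longrightarrow> T \<subseteq> {0..<m} \<Longrightarrow> card T + j = r \<Longrightarrow> superset_sum m j v T = 0"
    by (fact johnson_adj_eigenfunction_exists[OF r m i(1)])
  show "\<mu> \<in> matrix_eigenvalues (johnson_verts m r) (johnson_adj_matrix r)"
    unfolding i(2) by (rule matrix_eigenvaluesI[OF v(1-4)])
qed

section \<open>Spectrum of \<open>n Dist + Adj\<close> for the Johnson graph\<close>

lemma sum_indicator_eq_card:
  "finite A \<Longrightarrow> (\<Sum>x\<in>A. if P x then 1 else 0 :: real) = real (card {x \<in> A. P x})"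
  by (simp add: sum.If_cases Int_def conj_commute)

lemma card_subsets_containing:
  assumes X: "finite X" and x: "x \<in> X" and r: "r \<ge> 1"
  shows "card {A. A \<subseteq> X \<and> card A = r \<and> x \<in> A} = (card X - 1) choose (r - 1)"
proof -
  have "bij_betw (\<lambda>A. A - {x}) {A. A \<subseteq> X \<and> card A = r \<and> x \<in> A} {A. A \<subseteq> X - {x} \<and> card A = r - 1}"
  proof (rule bij_betw_byWitness[where f' = "insert x"])
    show "(\<lambda>A. A - {x}) ` {A. A \<subseteq> X \<and> card A = r \<and> x \<in> A} \<subseteq> {A. A \<subseteq> X - {x} \<and> card A = r - 1}"
      by auto
    have "card (insert x A) = r" if "A \<subseteq> X - {x}" "card A = r - 1" for A
    proof -
      have "finite A" "x \<notin> A" using that(1) finite_subset[OF _ X, of A] by auto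
      then show ?thesis using that(2) r by simp
    qed
    then show "insert x ` {A. A \<subseteq> X - {x} \<and> card A = r - 1} \<subseteq> {A. A \<subseteq> X \<and> card A = r \<and> x \<in> A}"
      using x by auto
  qed auto
  then have "card {A. A \<subseteq> X \<and> card A = r \<and> x \<in> A} = card {A. A \<subseteq> X - {x} \<and> card A = r - 1}"
    by (rule bij_betw_same_card)
  also have "\<dots> = (card X - 1) choose (r - 1)" using X x by (simp add: n_subsets)
  finally show ?thesis .
qed

lemma card_johnson_verts_containing:
  assumes "x < m" "r \<ge> 1"
  shows "card {A \<in> johnson_verts m r. x \<in> A} = (m - 1) choose (r - 1)"
proof -
  have "{A \<in> johnson_verts m r. x \<in> A} = {A. A \<subseteq> {0..<m} \<and> card A = r \<and> x \<in> A}"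
    by (auto simp: johnson_verts_iff)
  then show ?thesis using card_subsets_containing[of "{0..<m}" x r] assms by simp
qed

lemma card_johnson_verts_containing_both:
  assumes x: "x < m" and y: "y < m" and r: "r \<ge> 1"
  shows "real (card {A \<in> johnson_verts m r. x \<in> A \<and> y \<in> A}) =
    real ((m - 1) choose (r - 1)) - (if x = y then 0 else real ((m - 2) choose (r - 1)))"
proof (cases "x = y")
  case True
  then show ?thesis using card_johnson_verts_containing[OF x r] by simp
next
  case False
  have "{A \<in> johnson_verts m r. x \<in> A \<and> y \<notin> A} = {A. A \<subseteq> {0..<m} - {y} \<and> card A = r \<and> x \<in> A}"
    by (auto simp: johnson_verts_iff)
  then have "card {A \<in> johnson_verts m r. x \<in> A \<and> y \<notin> A} = (m - 2) choose (r - 1)"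
    using card_subsets_containing[of "{0..<m} - {y}" x r] x y r False by (simp add: numeral_2_eq_2)
  moreover have "card {A \<in> johnson_verts m r. x \<in> A} =
      card {A \<in> johnson_verts m r. x \<in> A \<and> y \<in> A} + card {A \<in> johnson_verts m r. x \<in> A \<and> y \<notin> A}"
    by (subst card_Un_disjoint[symmetric]) (auto intro: arg_cong[where f = card] simp: finite_johnson_verts)
  ultimately show ?thesis using card_johnson_verts_containing[OF x r] False by simp
qed

lemma sum_card_Int_mult:
  assumes "A \<in> johnson_verts m r"
  shows "(\<Sum>B\<in>johnson_verts m r. real (card (A \<inter> B)) * v B) =
    (\<Sum>x\<in>A. \<Sum>B\<in>johnson_verts m r. if x \<in> B then v B else 0)"
proof -
  have finA: "finite A" using assms finite_subset_atLeastLessThan by (auto simp: johnson_verts_iff)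
  have "real (card (A \<inter> B)) * v B = (\<Sum>x\<in>A. if x \<in> B then v B else 0)" for B
    using sum.inter_filter[OF finA, of "\<lambda>_. v B" "\<lambda>x. x \<in> B"] by (simp add: Int_def)
  then show ?thesis by (simp add: sum.swap[of _ A])
qed

lemma johnson_s_eq:
  assumes "1 \<le> r" "r \<le> m"
  shows "johnson_s m r = real r * real ((m - 1) choose r)"
proof -
  have summand: "j * ((r choose j) * ((m - r) choose j)) = r * (((m - r) choose j) * ((r - 1) choose (r - j)))"
    if j: "j \<le> r" for j
  proof (cases "j = 0")
    case True then show ?thesis using assms by simp
  next
    case False
    then have "j * (r choose j) = r * ((r - 1) choose (j - 1))"
      by (simp add: times_binomial_minus1_eq)
    moreover have "(r - 1) choose (j - 1) = (r - 1) choose (r - j)"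
      using binomial_symmetric[of "j - 1" "r - 1"] False j by simp
    ultimately show ?thesis by (simp add: algebra_simps)
  qed
  have "(\<Sum>j=0..r. j * ((r choose j) * ((m - r) choose j))) =
        r * (\<Sum>j\<le>r. ((m - r) choose j) * ((r - 1) choose (r - j)))"
    by (simp add: atLeast0AtMost summand sum_distrib_left)
  also have "(\<Sum>j\<le>r. ((m - r) choose j) * ((r - 1) choose (r - j))) = (m - r + (r - 1)) choose r"
    by (rule vandermonde)
  also have "m - r + (r - 1) = m - 1" using assms by simp
  finally have "(\<Sum>j=0..r. j * ((r choose j) * ((m - r) choose j))) = r * ((m - 1) choose r)" .
  moreover have "johnson_s m r = real (\<Sum>j=0..r. j * ((r choose j) * ((m - r) choose j)))"
    unfolding johnson_s_def johnson_k_def by simp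
  ultimately show ?thesis by simp
qed

lemma johnson_s_eq_diff:
  assumes "1 \<le> r" "r \<le> m"
  shows "johnson_s m r = real r * real (m choose r) - real r * real ((m - 1) choose (r - 1))"
proof -
  have "m choose r = ((m - 1) choose r) + ((m - 1) choose (r - 1))"
    using assms binomial_Suc_Suc[of "m - 1" "r - 1"] by simp
  then show ?thesis using johnson_s_eq[OF assms] by (simp add: algebra_simps)
qed

lemma johnson_s_div:
  assumes "1 \<le> r" "r \<le> m" "m \<ge> 2"
  shows "johnson_s m r / (real m - 1) = real ((m - 2) choose (r - 1))"
proof -
  have "r * ((m - 1) choose r) = (m - 1) * ((m - 2) choose (r - 1))"
    using assms times_binomial_minus1_eq[of r "m - 1"] by (simp add: diff_diff_add numeral_2_eq_2)
  then have "real r * real ((m - 1) choose r) = (real m - 1) * real ((m - 2) choose (r - 1))"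
    using assms by (metis of_nat_1 of_nat_diff of_nat_mult le_trans one_le_numeral)
  then show ?thesis using johnson_s_eq[OF assms(1,2)] assms(3) by (simp add: field_simps)
qed

definition johnson_dist :: "nat \<Rightarrow> nat set \<Rightarrow> nat set \<Rightarrow> nat" where
  "johnson_dist r A B = r - card (A \<inter> B)"

definition johnson_dist_adj_matrix :: "nat \<Rightarrow> nat \<Rightarrow> nat set \<Rightarrow> nat set \<Rightarrow> real" where
  "johnson_dist_adj_matrix n r A B = real n * real (johnson_dist r A B) + johnson_adj_matrix r A B"

lemma johnson_dist_adj_matrix_sym: "johnson_dist_adj_matrix n r A B = johnson_dist_adj_matrix n r B A"
  unfolding johnson_dist_adj_matrix_def johnson_dist_def by (simp add: johnson_adj_matrix_sym Int_commute)

lemma johnson_dist_adj_matrix_sum: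
  assumes A: "A \<in> johnson_verts m r"
  shows "(\<Sum>B\<in>johnson_verts m r. johnson_dist_adj_matrix n r A B * v B) =
    real n * (real r * (\<Sum>B\<in>johnson_verts m r. v B) - (\<Sum>x\<in>A. \<Sum>B\<in>johnson_verts m r. if x \<in> B then v B else 0))
    + (\<Sum>B\<in>johnson_verts m r. johnson_adj_matrix r A B * v B)"
proof -
  have dist: "real (johnson_dist r A B) = real r - real (card (A \<inter> B))" for B
    using A card_mono[of A "A \<inter> B"] finite_subset_atLeastLessThan[of A m]
    by (auto simp: johnson_dist_def johnson_verts_iff of_nat_diff)
  have "(\<Sum>B\<in>johnson_verts m r. johnson_dist_adj_matrix n r A B * v B) =
    (\<Sum>B\<in>johnson_verts m r. real n * real r * v B - real n * (real (card (A \<inter> B)) * v B)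
      + johnson_adj_matrix r A B * v B)"
    unfolding johnson_dist_adj_matrix_def dist by (intro sum.cong refl) (simp add: algebra_simps)
  also have "\<dots> = real n * (real r * (\<Sum>B\<in>johnson_verts m r. v B)
      - (\<Sum>B\<in>johnson_verts m r. real (card (A \<inter> B)) * v B))
    + (\<Sum>B\<in>johnson_verts m r. johnson_adj_matrix r A B * v B)"
    by (simp add: sum.distrib sum_subtractf sum_distrib_left algebra_simps)
  finally show ?thesis by (simp only: sum_card_Int_mult[OF A])
qed

lemma johnson_adj_matrix_row_sum:
  assumes A: "A \<in> johnson_verts m r" and r: "r \<ge> 1"
  shows "(\<Sum>B\<in>johnson_verts m r. johnson_adj_matrix r A B) = real r * (real m - real r)"
proof -
  have Am: "A \<subseteq> {0..<m}" "card A = r" using A by (auto simp: johnson_verts_iff)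
  have "(\<Sum>B\<in>johnson_verts m r. johnson_adj_matrix r A B) = exchange_sum m (\<lambda>_. 1) A"
    using johnson_adj_matrix_sum[OF A r, of "\<lambda>_. 1"] by simp
  also have "\<dots> = real r * real (card ({0..<m} - A))" using Am by (simp add: exchange_sum_def)
  also have "real (card ({0..<m} - A)) = real m - real r"
    using Am card_mono[OF _ Am(1)] finite_subset_atLeastLessThan[OF Am(1)]
    by (simp add: card_Diff_subset of_nat_diff)
  finally show ?thesis .
qed

text \<open>For \<open>z \<notin> A\<close> the exchanged set \<open>insert z (A - {y})\<close> contains \<open>x\<close> iff \<open>z = x\<close>, or
  \<open>x \<in> A\<close> and \<open>y \<noteq> x\<close>; counting the pairs \<open>(y, z)\<close> gives
  \<open>r + ((r - 1) (m - r) - r) [x \<in> A]\<close>.\<close>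
lemma johnson_adj_matrix_indicator:
  assumes A: "A \<in> johnson_verts m r" and r: "r \<ge> 1" and x: "x < m"
  shows "(\<Sum>B\<in>johnson_verts m r. johnson_adj_matrix r A B * (if x \<in> B then 1 else 0)) =
    real r + johnson_lambda m r 1 * (if x \<in> A then 1 else 0)"
proof -
  have Am: "A \<subseteq> {0..<m}" "card A = r" using A by (auto simp: johnson_verts_iff)
  have finA: "finite A" using Am(1) by (rule finite_subset_atLeastLessThan)
  have cD: "card ({0..<m} - A) = m - r" using Am finA by (simp add: card_Diff_subset)
  have rm: "r \<le> m" using card_mono[OF _ Am(1)] Am(2) by simp
  have "(\<Sum>B\<in>johnson_verts m r. johnson_adj_matrix r A B * (if x \<in> B then 1 else 0)) =
    (\<Sum>y\<in>A. \<Sum>z\<in>{0..<m} - A. if x \<in> insert z (A - {y}) then 1 else 0)"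
    using johnson_adj_matrix_sum[OF A r] by (simp add: exchange_sum_def)
  also have "\<dots> = real r + johnson_lambda m r 1 * (if x \<in> A then 1 else 0)"
  proof (cases "x \<in> A")
    case True
    have "(\<Sum>y\<in>A. \<Sum>z\<in>{0..<m} - A. if x \<in> insert z (A - {y}) then 1 else 0) =
          (\<Sum>y\<in>A. if y = x then 0 else real (m - r) :: real)"
      using True cD by (intro sum.cong refl) auto
    also have "\<dots> = (\<Sum>y\<in>A - {x}. real (m - r))"
      by (rule sum.mono_neutral_cong_right) (use finA in auto)
    also have "\<dots> = real (r - 1) * real (m - r)"
      using True Am finA by simp
    finally show ?thesis using True r rm unfolding johnson_lambda_def
      by (simp add: of_nat_diff algebra_simps)
  next
    case False
    have "(\<Sum>z\<in>{0..<m} - A. if x \<in> insert z (A - {y}) then 1 else 0) = (1 :: real)" for y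
    proof -
      have "(\<Sum>z\<in>{0..<m} - A. if x \<in> insert z (A - {y}) then 1 else 0) =
            (\<Sum>z\<in>{0..<m} - A. if z = x then 1 else 0 :: real)"
        using False by (intro sum.cong refl) auto
      then show ?thesis using False x by (simp add: sum.delta)
    qed
    then show ?thesis using False Am by simp
  qed
  finally show ?thesis .
qed

lemma johnson_dist_adj_matrix_row_sum:
  assumes A: "A \<in> johnson_verts m r" and r: "r \<ge> 1"
  shows "(\<Sum>B\<in>johnson_verts m r. johnson_dist_adj_matrix n r A B) = real n * johnson_s m r + johnson_lambda m r 0"
proof -
  have Am: "A \<subseteq> {0..<m}" "card A = r" using A by (auto simp: johnson_verts_iff)
  have rm: "r \<le> m" using card_mono[OF _ Am(1)] Am(2) by simp
  have "(\<Sum>B\<in>johnson_verts m r. if x \<in> B then 1 else 0) = real ((m - 1) choose (r - 1))" if "x \<in> A" for x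
    using that Am card_johnson_verts_containing[of x m r] r
    by (simp add: sum_indicator_eq_card[OF finite_johnson_verts] subset_eq)
  then have "(\<Sum>B\<in>johnson_verts m r. johnson_dist_adj_matrix n r A B) =
      real n * (real r * real (m choose r) - real r * real ((m - 1) choose (r - 1))) + real r * (real m - real r)"
    using johnson_dist_adj_matrix_sum[OF A, of n "\<lambda>_. 1"] johnson_adj_matrix_row_sum[OF A r] Am
    by (simp add: card_johnson_verts)
  then show ?thesis using johnson_s_eq_diff[OF r rm] by (simp add: johnson_lambda_def)
qed

lemma johnson_dist_adj_matrix_indicator:
  assumes A: "A \<in> johnson_verts m r" and r: "r \<ge> 1" and x: "x < m"
  defines "c \<equiv> real ((m - 2) choose (r - 1))"
  shows "(\<Sum>B\<in>johnson_verts m r. johnson_dist_adj_matrix n r A B * (if x \<in> B then 1 else 0)) =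
    (johnson_lambda m r 1 - real n * c) * (if x \<in> A then 1 else 0) + real r * (real n * c + 1)"
proof -
  define a where "a = real ((m - 1) choose (r - 1))"
  have Am: "A \<subseteq> {0..<m}" "card A = r" using A by (auto simp: johnson_verts_iff)
  have finA: "finite A" using Am(1) by (rule finite_subset_atLeastLessThan)
  have count_x: "(\<Sum>B\<in>johnson_verts m r. if x \<in> B then 1 else 0) = a"
    unfolding a_def using card_johnson_verts_containing[OF x r]
    by (simp add: sum_indicator_eq_card[OF finite_johnson_verts])
  have count_xy: "(\<Sum>B\<in>johnson_verts m r. if y \<in> B then (if x \<in> B then 1 else 0) else 0) =
      a - (if y = x then 0 else c)" if "y \<in> A" for y
  proof -
    have "(\<Sum>B\<in>johnson_verts m r. if y \<in> B then (if x \<in> B then 1 else 0) else 0) =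
          real (card {B \<in> johnson_verts m r. y \<in> B \<and> x \<in> B})"
      by (simp add: sum_indicator_eq_card[OF finite_johnson_verts, symmetric] if_if_eq_conj)
    also have "\<dots> = a - (if y = x then 0 else c)"
      using card_johnson_verts_containing_both[OF _ x r, of y] that Am unfolding a_def c_def by auto
    finally show ?thesis .
  qed
  have "(\<Sum>y\<in>A. if y = x then 0 else c) = (\<Sum>y\<in>A - {x}. c)"
    by (rule sum.mono_neutral_cong_right) (use finA in auto)
  also have "\<dots> = c * (real r - (if x \<in> A then 1 else 0))"
    using finA Am(2) card_gt_0_iff[of A] by (auto simp: of_nat_diff)
  finally have "(\<Sum>y\<in>A. if y = x then 0 else c) = c * (real r - (if x \<in> A then 1 else 0))" .
  then have count_Axy: "(\<Sum>y\<in>A. \<Sum>B\<in>johnson_verts m r. if y \<in> B then (if x \<in> B then 1 else 0) else 0) =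
      real r * a - c * (real r - (if x \<in> A then 1 else 0))"
    using count_xy Am(2) by (simp add: sum_subtractf)
  show ?thesis
    unfolding johnson_dist_adj_matrix_sum[OF A, of n "\<lambda>B. if x \<in> B then 1 else 0"]
      johnson_adj_matrix_indicator[OF A r x] count_x count_Axy
    by (simp add: algebra_simps)
qed

lemma johnson_dist_adj_matrix_sum_balanced:
  assumes A: "A \<in> johnson_verts m r" and sum: "(\<Sum>B\<in>johnson_verts m r. v B) = 0"
    and point_sums: "\<And>x. x < m \<Longrightarrow> (\<Sum>B\<in>johnson_verts m r. if x \<in> B then v B else 0) = 0"
  shows "(\<Sum>B\<in>johnson_verts m r. johnson_dist_adj_matrix n r A B * v B) =
    (\<Sum>B\<in>johnson_verts m r. johnson_adj_matrix r A B * v B)"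
proof -
  have "(\<Sum>x\<in>A. \<Sum>B\<in>johnson_verts m r. if x \<in> B then v B else 0) = 0"
    using A point_sums by (intro sum.neutral) (auto simp: johnson_verts_iff)
  then show ?thesis using johnson_dist_adj_matrix_sum[OF A, of n v] sum by simp
qed

lemma johnson_dist_adj_eigenvalue_balanced:
  assumes r: "r \<ge> 1" and A: "A \<in> johnson_verts m r" "v A \<noteq> 0"
    and eig: "\<And>A. A \<in> johnson_verts m r \<Longrightarrow>
      (\<Sum>B\<in>johnson_verts m r. johnson_dist_adj_matrix n r A B * v B) = \<mu> * v A"
    and sum: "(\<Sum>B\<in>johnson_verts m r. v B) = 0"
    and point_sums: "\<And>x. x < m \<Longrightarrow> (\<Sum>B\<in>johnson_verts m r. if x \<in> B then v B else 0) = 0"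
  shows "\<exists>i. 2 \<le> i \<and> i \<le> r \<and> \<mu> = johnson_lambda m r i"
proof -
  have "(\<Sum>B\<in>johnson_verts m r. johnson_adj_matrix r A B * v B) = \<mu> * v A"
    if "A \<in> johnson_verts m r" for A
    using johnson_dist_adj_matrix_sum_balanced[OF that sum point_sums] eig[OF that] by simp
  moreover have "superset_sum m (r - 1) v T = 0" if T: "T \<subseteq> {0..<m}" "card T + (r - 1) = r" for T
  proof -
    have "card T = 1" using T(2) r by simp
    then obtain x where "T = {x}" by (rule card_1_singletonE)
    then show ?thesis using T point_sums[of x] superset_sum_singleton[of x m r v] r by simp
  qed
  ultimately obtain i where "i \<le> r" "r < i + (r - 1)" "\<mu> = johnson_lambda m r i"
    using johnson_adj_eigenvalue_cases[where v = v, OF r A] by blast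
  then show ?thesis by (intro exI[of _ i]) simp
qed

lemma johnson_dist_adj_eigenvalues_subset:
  assumes r: "r \<ge> 1" and rm: "r \<le> m" and m: "m \<ge> 2"
  shows "matrix_eigenvalues (johnson_verts m r) (johnson_dist_adj_matrix n r) \<subseteq>
    {real n * johnson_s m r + johnson_lambda m r 0, johnson_lambda m r 1 - real n * johnson_s m r / (real m - 1)}
    \<union> {johnson_lambda m r i | i. 2 \<le> i \<and> i \<le> r}"
proof
  let ?V = "johnson_verts m r" and ?M = "johnson_dist_adj_matrix n r"
  fix \<mu> assume "\<mu> \<in> matrix_eigenvalues ?V ?M"
  then obtain v A where "\<And>B. B \<notin> ?V \<Longrightarrow> v B = 0" and A: "A \<in> ?V" "v A \<noteq> 0"
    and eig: "\<And>A. A \<in> ?V \<Longrightarrow> (\<Sum>B\<in>?V. ?M A B * v B) = \<mu> * v A"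
    by (elim matrix_eigenvaluesE) blast
  have sym: "?M A B = ?M B A" for A B by (rule johnson_dist_adj_matrix_sym)
  define g where "g x = (\<Sum>B\<in>?V. if x \<in> B then v B else 0)" for x
  consider "(\<Sum>B\<in>?V. v B) \<noteq> 0" | "(\<Sum>B\<in>?V. v B) = 0" "\<exists>x<m. g x \<noteq> 0"
    | "(\<Sum>B\<in>?V. v B) = 0" "\<And>x. x < m \<Longrightarrow> g x = 0" by blast
  then show "\<mu> \<in> {real n * johnson_s m r + johnson_lambda m r 0,
      johnson_lambda m r 1 - real n * johnson_s m r / (real m - 1)} \<union> {johnson_lambda m r i | i. 2 \<le> i \<and> i \<le> r}"
  proof cases
    case 1
    have "\<mu> = real n * johnson_s m r + johnson_lambda m r 0"
      by (rule eigenvalue_eq_by_pairing[where w = "\<lambda>_. 1" and \<gamma> = 0, OF sym eig])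
        (use 1 johnson_dist_adj_matrix_row_sum[OF _ r] in simp_all)
    then show ?thesis by simp
  next
    case 2
    then obtain x where x: "x < m" "g x \<noteq> 0" by blast
    have pairing: "(\<Sum>B\<in>?V. (if x \<in> B then 1 else 0) * v B) = g x"
      unfolding g_def by (intro sum.cong) auto
    have "\<mu> = johnson_lambda m r 1 - real n * real ((m - 2) choose (r - 1))"
      by (rule eigenvalue_eq_by_pairing[where w = "\<lambda>B. if x \<in> B then 1 else 0", OF sym eig
            johnson_dist_adj_matrix_indicator[OF _ r x(1)]])
        (use 2 x pairing in simp_all)
    then show ?thesis using johnson_s_div[OF r rm m] by (simp add: times_divide_eq_right[symmetric])
  next
    case 3
    then show ?thesis
      using johnson_dist_adj_eigenvalue_balanced[OF r A eig] by (auto simp: g_def)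
  qed
qed

lemma johnson_dist_adj_eigenvalue_0:
  assumes r: "r \<ge> 1" and rm: "r \<le> m"
  shows "real n * johnson_s m r + johnson_lambda m r 0 \<in> matrix_eigenvalues (johnson_verts m r) (johnson_dist_adj_matrix n r)"
proof (rule matrix_eigenvaluesI[where v = "\<lambda>A. if A \<in> johnson_verts m r then 1 else 0" and a = "{0..<r}"])
  fix A assume "A \<in> johnson_verts m r"
  then show "(\<Sum>B\<in>johnson_verts m r. johnson_dist_adj_matrix n r A B * (if B \<in> johnson_verts m r then 1 else 0)) =
      (real n * johnson_s m r + johnson_lambda m r 0) * (if A \<in> johnson_verts m r then 1 else 0)"
    using johnson_dist_adj_matrix_row_sum[of A m r n] r by simp
qed (use rm in \<open>auto simp: johnson_verts_iff\<close>)

lemma johnson_dist_adj_eigenvalue_ge_2: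
  assumes r: "r \<ge> 1" and m: "2 * r \<le> m" and i: "2 \<le> i" "i \<le> r"
  shows "johnson_lambda m r i \<in> matrix_eigenvalues (johnson_verts m r) (johnson_dist_adj_matrix n r)"
proof -
  obtain v A where v0: "\<And>B. B \<notin> johnson_verts m r \<Longrightarrow> v B = 0" and A: "A \<in> johnson_verts m r" "v A \<noteq> 0"
    and eig: "\<And>A. A \<in> johnson_verts m r \<Longrightarrow>
      (\<Sum>B\<in>johnson_verts m r. johnson_adj_matrix r A B * v B) = johnson_lambda m r i * v A"
    and sup: "\<And>j T. r < i + j \<Longrightarrow> T \<subseteq> {0..<m} \<Longrightarrow> card T + j = r \<Longrightarrow> superset_sum m j v T = 0"
    by (fact johnson_adj_eigenfunction_exists[OF r m i(2)])
  have "(\<Sum>B\<in>johnson_verts m r. v B) = 0"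
    using sup[of r "{}"] i by (simp add: superset_sum_empty)
  moreover have "(\<Sum>B\<in>johnson_verts m r. if x \<in> B then v B else 0) = 0" if "x < m" for x
    using sup[of "r - 1" "{x}"] superset_sum_singleton[OF that r, of v] that i r by simp
  ultimately have "(\<Sum>B\<in>johnson_verts m r. johnson_dist_adj_matrix n r A B * v B) = johnson_lambda m r i * v A"
    if "A \<in> johnson_verts m r" for A
    using johnson_dist_adj_matrix_sum_balanced[OF that] eig[OF that] by simp
  then show ?thesis using v0 A by (intro matrix_eigenvaluesI[where v = v and a = A])
qed

lemma johnson_dist_adj_eigenvalue_1:
  assumes r: "r \<ge> 1" and m: "2 * r \<le> m" and m2: "m \<ge> 2"
  shows "johnson_lambda m r 1 - real n * johnson_s m r / (real m - 1) \<in>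
    matrix_eigenvalues (johnson_verts m r) (johnson_dist_adj_matrix n r)"
proof -
  let ?V = "johnson_verts m r"
  define w where "w A = (if 0 \<in> A then 1 else 0) - (if 1 \<in> A then 1 else 0 :: real)" for A :: "nat set"
  define \<beta> where "\<beta> = johnson_lambda m r 1 - real n * real ((m - 2) choose (r - 1))"
  have "(\<Sum>B\<in>?V. johnson_dist_adj_matrix n r A B * w B) = \<beta> * w A" if "A \<in> ?V" for A
    using johnson_dist_adj_matrix_indicator[OF that r, of 0 n] johnson_dist_adj_matrix_indicator[OF that r, of 1 n] m2
    by (simp add: w_def \<beta>_def right_diff_distrib sum_subtractf algebra_simps)
  then have "(\<Sum>B\<in>?V. johnson_dist_adj_matrix n r A B * (if B \<in> ?V then w B else 0)) =
      \<beta> * (if A \<in> ?V then w A else 0)" if "A \<in> ?V" for A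
    using that by (simp cong: sum.cong)
  moreover have "insert 0 {2..<Suc r} \<in> ?V" using m r by (auto simp: johnson_verts_iff)
  moreover have "w (insert 0 {2..<Suc r}) \<noteq> 0" by (simp add: w_def)
  ultimately have "\<beta> \<in> matrix_eigenvalues ?V (johnson_dist_adj_matrix n r)"
    by (intro matrix_eigenvaluesI[where v = "\<lambda>A. if A \<in> ?V then w A else 0" and a = "insert 0 {2..<Suc r}"]) auto
  then show ?thesis using johnson_s_div[OF r _ m2] m by (simp add: \<beta>_def times_divide_eq_right[symmetric])
qed

lemma johnson_dist_adj_eigenvalues:
  assumes r: "r \<ge> 1" and m: "2 * r \<le> m" and m2: "m \<ge> 2"
  shows "matrix_eigenvalues (johnson_verts m r) (johnson_dist_adj_matrix n r) =
    {real n * johnson_s m r + johnson_lambda m r 0, johnson_lambda m r 1 - real n * johnson_s m r / (real m - 1)}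
    \<union> {johnson_lambda m r i | i. 2 \<le> i \<and> i \<le> r}"
  using johnson_dist_adj_eigenvalues_subset[OF r _ m2] johnson_dist_adj_eigenvalue_0[OF r]
    johnson_dist_adj_eigenvalue_1[OF r m m2] johnson_dist_adj_eigenvalue_ge_2[OF r m] m
  by auto

section \<open>Distances in the Kronecker product\<close>

lemma johnson_dist_eq_0_iff:
  assumes "A \<in> johnson_verts m r" "B \<in> johnson_verts m r"
  shows "johnson_dist r A B = 0 \<longleftrightarrow> A = B"
proof
  assume "johnson_dist r A B = 0"
  then have "card (A \<inter> B) \<ge> card A" "card (A \<inter> B) \<ge> card B"
    using assms by (auto simp: johnson_dist_def johnson_verts_iff)
  moreover have "finite A" "finite B"
    using assms finite_subset_atLeastLessThan by (auto simp: johnson_verts_iff)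
  ultimately have "A \<inter> B = A" "A \<inter> B = B"
    by (metis Int_lower1 Int_lower2 card_seteq)+
  then show "A = B" by simp
qed (use assms in \<open>simp add: johnson_dist_def johnson_verts_iff\<close>)

lemma johnson_adj_iff_dist_eq_1:
  assumes "A \<in> johnson_verts m r" "r \<ge> 1"
  shows "johnson_adj r A B \<longleftrightarrow> johnson_dist r A B = 1"
proof -
  have "card (A \<inter> B) \<le> r"
    using assms card_mono[of A "A \<inter> B"] finite_subset_atLeastLessThan[of A m]
    by (auto simp: johnson_verts_iff)
  then show ?thesis using assms(2) by (auto simp: johnson_adj_def johnson_dist_def)
qed

lemma johnson_dist_le_adj:
  assumes A: "A \<in> johnson_verts m r" and A': "A' \<in> johnson_verts m r"
    and adj: "johnson_adj r A A'" and r: "r \<ge> 1"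
  shows "johnson_dist r A B \<le> johnson_dist r A' B + 1"
proof -
  have fin: "finite A" "finite A'" and cA': "card A' = r"
    using A A' finite_subset_atLeastLessThan by (auto simp: johnson_verts_iff)
  have "card (A' - A) = 1"
    using card_Diff_subset_Int[of A' A] fin cA' adj r by (simp add: johnson_adj_def Int_commute)
  moreover have "A' \<inter> B \<subseteq> (A \<inter> B) \<union> (A' - A)" by auto
  then have "card (A' \<inter> B) \<le> card (A \<inter> B) + card (A' - A)"
    using fin card_mono[of "(A \<inter> B) \<union> (A' - A)" "A' \<inter> B"] card_Un_le[of "A \<inter> B" "A' - A"] by auto
  ultimately show ?thesis by (simp add: johnson_dist_def)
qed

lemma johnson_exchange_towards:
  assumes A: "A \<in> johnson_verts m r" and B: "B \<in> johnson_verts m r" and "A \<noteq> B" and r: "r \<ge> 1"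
  obtains A' where "A' \<in> johnson_verts m r" "johnson_adj r A A'" "johnson_dist r A' B + 1 = johnson_dist r A B"
proof -
  have fin: "finite A" "finite B" and c: "card A = r" "card B = r" and Bm: "B \<subseteq> {0..<m}"
    using A B finite_subset_atLeastLessThan by (auto simp: johnson_verts_iff)
  have "\<not> A \<subseteq> B" "\<not> B \<subseteq> A"
    using \<open>A \<noteq> B\<close> fin c card_subset_eq[of A B] card_subset_eq[of B A] by auto
  then obtain x y where x: "x \<in> A" "x \<notin> B" and y: "y \<in> B" "y \<notin> A" by blast
  let ?A' = "insert y (A - {x})"
  have "?A' \<in> johnson_verts m r \<and> johnson_adj r A ?A'"
    using bij_betw_imp_surj_on[OF bij_betw_johnson_exchange[OF A r]] x y Bm by blast
  moreover have "?A' \<inter> B = insert y (A \<inter> B)" using x y by auto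
  then have "card (?A' \<inter> B) = Suc (card (A \<inter> B))" using y fin by simp
  moreover have "card (A \<inter> B) < r"
    using x fin c psubset_card_mono[of A "A \<inter> B"] by (metis Int_iff Int_lower1 psubsetI)
  ultimately show ?thesis by (intro that[of ?A']) (auto simp: johnson_dist_def)
qed

lemma johnson_neighbour_exists:
  assumes A: "A \<in> johnson_verts m r" and r: "r \<ge> 1" and rm: "r < m"
  obtains A' where "A' \<in> johnson_verts m r" "johnson_adj r A A'"
proof -
  have "A \<noteq> {}" "{0..<m} - A \<noteq> {}"
    using A r rm card_mono[of "{0..<m}" A] by (auto simp: johnson_verts_iff)
  then obtain x y where "x \<in> A" "y \<in> {0..<m} - A" by blast
  then show ?thesis
    using that bij_betw_imp_surj_on[OF bij_betw_johnson_exchange[OF A r]] by blast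
qed

lemma johnson_common_neighbour:
  assumes A: "A \<in> johnson_verts m r" and B: "B \<in> johnson_verts m r" and adj: "johnson_adj r A B"
    and r: "r \<ge> 1" and rm: "r + 2 \<le> m"
  obtains C where "C \<in> johnson_verts m r" "johnson_adj r A C" "johnson_adj r C B"
proof -
  have fin: "finite A" "finite B" and c: "card A = r" "card B = r" and sub: "A \<subseteq> {0..<m}" "B \<subseteq> {0..<m}"
    using A B finite_subset_atLeastLessThan by (auto simp: johnson_verts_iff)
  have cI: "card (A \<inter> B) = r - 1" using adj by (simp add: johnson_adj_def)
  have "card (A \<union> B) = r + 1" using card_Un_Int[OF fin] c cI r by simp
  then have "\<not> {0..<m} \<subseteq> A \<union> B" using rm card_mono[of "A \<union> B" "{0..<m}"] fin by auto
  then obtain z where "z \<in> {0..<m}" "z \<notin> A \<union> B" by blast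
  then have z: "z < m" "z \<notin> A" "z \<notin> B" by auto
  let ?C = "insert z (A \<inter> B)"
  have "card ?C = r" using z fin cI r by simp
  then have "?C \<in> johnson_verts m r" using z sub by (auto simp: johnson_verts_iff)
  moreover have "A \<inter> ?C = A \<inter> B" "?C \<inter> B = A \<inter> B" using z by auto
  ultimately show ?thesis using that cI by (simp add: johnson_adj_def)
qed

lemma johnson_walk_step:
  assumes r: "r \<ge> 1" and rm: "r + 2 \<le> m" and A: "A \<in> johnson_verts m r" and B: "B \<in> johnson_verts m r"
    and d: "johnson_dist r A B \<le> Suc k" "k = 0 \<longrightarrow> A \<noteq> B"
  obtains A' where "A' \<in> johnson_verts m r" "johnson_adj r A A'" "johnson_dist r A' B \<le> k" "k = 1 \<longrightarrow> A' \<noteq> B"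
proof -
  have irrefl: "\<not> johnson_adj r C C" if "C \<in> johnson_verts m r" for C
    using that r by (simp add: johnson_adj_def johnson_verts_iff)
  consider "A = B" | "A \<noteq> B" "k = 1" "johnson_dist r A B = 1" | "A \<noteq> B" "\<not> (k = 1 \<and> johnson_dist r A B = 1)"
    by blast
  then show ?thesis
  proof cases
    case 1
    then obtain A' where A': "A' \<in> johnson_verts m r" "johnson_adj r A A'"
      using johnson_neighbour_exists[OF A r] rm by auto
    then have "johnson_dist r A' B = 1"
      using 1 johnson_adj_iff_dist_eq_1[OF A'(1) r] by (simp add: johnson_adj_sym)
    moreover have "k \<noteq> 0" "A' \<noteq> B" using d 1 A' irrefl by auto
    ultimately show ?thesis using A' that by auto
  next
    case 2
    then obtain C where C: "C \<in> johnson_verts m r" "johnson_adj r A C" "johnson_adj r C B"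
      using johnson_common_neighbour[OF A B _ r rm] johnson_adj_iff_dist_eq_1[OF A r] by auto
    moreover have "C \<noteq> B" using C(3) irrefl B by blast
    moreover have "johnson_dist r C B = 1" using C(3) johnson_adj_iff_dist_eq_1[OF C(1) r] by simp
    ultimately show ?thesis using 2 by (intro that[of C]) auto
  next
    case 3
    obtain A' where A': "A' \<in> johnson_verts m r" "johnson_adj r A A'" "johnson_dist r A' B + 1 = johnson_dist r A B"
      using johnson_exchange_towards[OF A B 3(1) r] by blast
    have "johnson_dist r A B \<noteq> 0" using 3(1) johnson_dist_eq_0_iff[OF A B] by simp
    then have "k = 1 \<longrightarrow> johnson_dist r A' B \<noteq> 0" using A'(3) d(1) 3(2) by auto
    then have "k = 1 \<longrightarrow> A' \<noteq> B" using johnson_dist_eq_0_iff[OF A'(1) B] by simp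
    moreover have "johnson_dist r A' B \<le> k" using A'(3) d(1) by simp
    ultimately show ?thesis using that[OF A'(1,2)] by blast
  qed
qed

lemma walk_of_length_johnson:
  assumes r: "r \<ge> 1" and rm: "r + 2 \<le> m" and A: "A \<in> johnson_verts m r" and B: "B \<in> johnson_verts m r"
  shows "walk_of_length (johnson_verts m r) (johnson_adj r) A B k \<longleftrightarrow>
    johnson_dist r A B \<le> k \<and> (k = 1 \<longrightarrow> A \<noteq> B)"
  using A
proof (induction k arbitrary: A)
  case 0
  then show ?case using johnson_dist_eq_0_iff[OF _ B] by (auto simp: walk_of_length_0)
next
  case (Suc k)
  have irrefl: "\<not> johnson_adj r C C" if "C \<in> johnson_verts m r" for C
    using that r by (simp add: johnson_adj_def johnson_verts_iff)
  show ?case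
  proof
    assume "walk_of_length (johnson_verts m r) (johnson_adj r) A B (Suc k)"
    then obtain A' where A': "johnson_adj r A A'" "walk_of_length (johnson_verts m r) (johnson_adj r) A' B k"
      by (auto simp: walk_of_length_Suc)
    moreover have "A' \<in> johnson_verts m r" using A'(2) by (rule walk_of_length_start)
    ultimately show "johnson_dist r A B \<le> Suc k \<and> (Suc k = 1 \<longrightarrow> A \<noteq> B)"
      using Suc.IH johnson_dist_le_adj[OF Suc.prems _ _ r, of A' B] irrefl
      by (fastforce simp: walk_of_length_0)
  next
    assume "johnson_dist r A B \<le> Suc k \<and> (Suc k = 1 \<longrightarrow> A \<noteq> B)"
    then have "johnson_dist r A B \<le> Suc k" "k = 0 \<longrightarrow> A \<noteq> B" by auto
    then obtain A' where A': "A' \<in> johnson_verts m r" "johnson_adj r A A'"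
      and "johnson_dist r A' B \<le> k \<and> (k = 1 \<longrightarrow> A' \<noteq> B)"
      by (rule johnson_walk_step[OF r rm Suc.prems B]) auto
    then have "walk_of_length (johnson_verts m r) (johnson_adj r) A' B k" using Suc.IH by blast
    then show "walk_of_length (johnson_verts m r) (johnson_adj r) A B (Suc k)"
      using A' Suc.prems by (auto simp: walk_of_length_Suc)
  qed
qed

lemma graph_dist_kron_complete_johnson:
  assumes n: "n \<ge> 3" and r: "r \<ge> 1" and rm: "r + 2 \<le> m" and i: "i < n" and j: "j < n"
    and A: "A \<in> johnson_verts m r" and B: "B \<in> johnson_verts m r"
  shows "graph_dist (kron_verts (complete_verts n) (johnson_verts m r)) (kron_adj complete_adj (johnson_adj r))
      (i, A) (j, B) =
    (if i = j then (if johnson_dist r A B = 1 then 2 else johnson_dist r A B)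
     else (if johnson_dist r A B = 0 then 2 else johnson_dist r A B))"
proof -
  define d where "d = johnson_dist r A B"
  have "walk_of_length (kron_verts (complete_verts n) (johnson_verts m r))
      (kron_adj complete_adj (johnson_adj r)) (i, A) (j, B) k \<longleftrightarrow>
    d \<le> k \<and> (if i = j then k \<noteq> 1 else k \<noteq> 0 \<and> (k = 1 \<longrightarrow> d \<noteq> 0))" for k
    unfolding walk_of_length_kron walk_of_length_complete[OF n i j] walk_of_length_johnson[OF r rm A B]
      johnson_dist_eq_0_iff[OF A B, symmetric] d_def
    by auto
  then have "graph_dist (kron_verts (complete_verts n) (johnson_verts m r))
      (kron_adj complete_adj (johnson_adj r)) (i, A) (j, B) =
    (LEAST k. d \<le> k \<and> (if i = j then k \<noteq> 1 else k \<noteq> 0 \<and> (k = 1 \<longrightarrow> d \<noteq> 0)))"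
    unfolding graph_dist_def by presburger
  also have "\<dots> = (if i = j then (if d = 1 then 2 else d) else (if d = 0 then 2 else d))"
    by (rule Least_equality) (auto split: if_splits)
  finally show ?thesis unfolding d_def .
qed

lemma distance_matrix_kron_complete_johnson:
  assumes "n \<ge> 3" "r \<ge> 1" "r + 2 \<le> m" "i < n" "j < n" "A \<in> johnson_verts m r" "B \<in> johnson_verts m r"
  shows "distance_matrix (kron_verts (complete_verts n) (johnson_verts m r)) (kron_adj complete_adj (johnson_adj r))
      (i, A) (j, B) =
    uniform_block_matrix (\<lambda>A B. real (johnson_dist r A B) + (if A = B then 2 else 0))
      (\<lambda>A B. johnson_adj_matrix r A B + (if A = B then -2 else 0)) (i, A) (j, B)"
proof -
  define d where "d = johnson_dist r A B"
  have "(A = B) = (d = 0)" "johnson_adj r A B = (d = 1)"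
    unfolding d_def using johnson_dist_eq_0_iff[OF assms(6,7)] johnson_adj_iff_dist_eq_1[OF assms(6,2)] by simp_all
  then show ?thesis
    unfolding distance_matrix_def graph_dist_kron_complete_johnson[OF assms] uniform_block_matrix_def
      johnson_adj_matrix_def
    by (simp add: d_def[symmetric])
qed

theorem theorem4p6:
  fixes n m r :: nat
  assumes "n \<ge> 3" and "r \<ge> 1" and "m \<ge> 2 * r" and "m \<ge> 3"
  shows "distance_eigenvalues
           (kron_verts (complete_verts n) (johnson_verts m r))
           (kron_adj complete_adj (johnson_adj r))
         = {2 * real n - 2 + real n * johnson_s m r + johnson_lambda m r 0,
            2 * real n - 2 - real n * johnson_s m r / (real m - 1) + johnson_lambda m r 1}
           \<union> {2 * real n - 2 + johnson_lambda m r i | i. 2 \<le> i \<and> i \<le> r}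
           \<union> {johnson_lambda m r i - 2 | i. i \<le> r}"
proof -
  let ?J = "johnson_verts m r"
  define X where "X = (\<lambda>A B. real (johnson_dist r A B) + (if A = B then 2 else 0))"
  define Y where "Y = (\<lambda>A B. johnson_adj_matrix r A B + (if A = B then -2 else 0))"
  have "distance_eigenvalues (kron_verts (complete_verts n) ?J) (kron_adj complete_adj (johnson_adj r)) =
      matrix_eigenvalues ({0..<n} \<times> ?J) (uniform_block_matrix X Y)"
    unfolding distance_eigenvalues_def kron_verts_def complete_verts_def X_def Y_def
    using distance_matrix_kron_complete_johnson[of n r m] assms
    by (intro matrix_eigenvalues_cong) (auto simp: kron_verts_def complete_verts_def)
  also have "\<dots> = matrix_eigenvalues ?J Y \<union> matrix_eigenvalues ?J (\<lambda>A B. real n * X A B + Y A B)"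
    using assms(1) by (intro uniform_block_eigenvalues finite_johnson_verts) simp
  also have "matrix_eigenvalues ?J Y = (\<lambda>t. t + -2) ` {johnson_lambda m r i | i. i \<le> r}"
    using matrix_eigenvalues_add_diagonal[OF finite_johnson_verts, where M = "johnson_adj_matrix r" and c = "-2"]
      johnson_adj_eigenvalues assms by (simp add: Y_def)
  also have "matrix_eigenvalues ?J (\<lambda>A B. real n * X A B + Y A B) =
      (\<lambda>t. t + (2 * real n - 2)) ` matrix_eigenvalues ?J (johnson_dist_adj_matrix n r)"
    unfolding matrix_eigenvalues_add_diagonal[OF finite_johnson_verts, symmetric]
    by (intro matrix_eigenvalues_cong) (simp add: X_def Y_def johnson_dist_adj_matrix_def algebra_simps)
  also have "matrix_eigenvalues ?J (johnson_dist_adj_matrix n r) =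
      {real n * johnson_s m r + johnson_lambda m r 0, johnson_lambda m r 1 - real n * johnson_s m r / (real m - 1)}
      \<union> {johnson_lambda m r i | i. 2 \<le> i \<and> i \<le> r}"
    using johnson_dist_adj_eigenvalues assms by simp
  finally show ?thesis by (auto simp: image_iff algebra_simps)
qed

end
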